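(* There exists an absolute constant $C>0$ such that for every prime $p$, the group $G=\mathrm{PSL}(2,p)$ satisfies $M(G)\le C\,p^{8/3}$.
   Context: For a finite group $G$, a multiplicative 3-matching of size $m$ in $G$ is a triple of families $\{a_i\}_{i=1}^m,\{b_i\}_{i=1}^m,\{c_i\}_{i=1}^m$ of elements of $G$ such that for all $i,j,l\in\{1,\dots,m\}$, $a_ib_jc_l=1$ if and only if $i=j=l$. $M(G)$ denotes the largest $m$ for which a multiplicative 3-matching of size $m$ exists in $G$. *)

theory Defs
  imports Complex_Main "HOL-Algebra.Coset" "HOL-Computational_Algebra.Primes"
begin

text \<open>SL(2,p): 2x2 matrices (a,b,c,d) = [[a,b],[c,d]] with entries in {0..p-1},
  determinant 1 mod p, multiplication mod p.\<close>
definition SL2 :: "int \<Rightarrow> (int \<times> int \<times> int \<times> int) monoid" where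
  "SL2 p = \<lparr> carrier = {(a,b,c,d). a \<in> {0..<p} \<and> b \<in> {0..<p} \<and> c \<in> {0..<p} \<and> d \<in> {0..<p}
                                 \<and> (a*d - b*c) mod p = 1},
            monoid.mult = (\<lambda>(a,b,c,d) (e,f,g,h).
                      ((a*e + b*g) mod p, (a*f + b*h) mod p, (c*e + d*g) mod p, (c*f + d*h) mod p)),
            one = (1, 0, 0, 1) \<rparr>"

definition SL2_center :: "int \<Rightarrow> (int \<times> int \<times> int \<times> int) set" where
  "SL2_center p = {(1, 0, 0, 1), (p - 1, 0, 0, p - 1)}"

definition PSL2 :: "int \<Rightarrow> (int \<times> int \<times> int \<times> int) set monoid" where
  "PSL2 p = SL2 p Mod SL2_center p"

definition mult_3_matching :: "('a, 'b) monoid_scheme \<Rightarrow> nat \<Rightarrow> bool" where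
  "mult_3_matching G m \<longleftrightarrow>
     (\<exists>a b c. (\<forall>i\<in>{1..m}. a i \<in> carrier G \<and> b i \<in> carrier G \<and> c i \<in> carrier G) \<and>
        (\<forall>i\<in>{1..m}. \<forall>j\<in>{1..m}. \<forall>l\<in>{1..m}.
            (a i \<otimes>\<^bsub>G\<^esub> b j \<otimes>\<^bsub>G\<^esub> c l = \<one>\<^bsub>G\<^esub> \<longleftrightarrow> i = j \<and> j = l)))"

definition M :: "('a, 'b) monoid_scheme \<Rightarrow> nat" where
  "M G = Max {m. mult_3_matching G m}"

end

theory Submission
  imports Defs "HOL-Analysis.Analysis" "HOL-Number_Theory.Number_Theory" "HOL-Algebra.Generated_Groups"
begin

text \<open>
  Let \<open>T\<close> be convolution with the indicator of \<open>A = {a_i}\<close> on functions on \<open>G = PSL(2,p)\<close>.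
  Evaluating \<open>T\<close> applied to the centred indicator of \<open>{b_j}\<close> at the points \<open>c_l^-1\<close> counts the
  solutions of \<open>a_i b_j c_l = 1\<close>, and Cauchy-Schwarz gives \<open>m^2 \<le> |G| (1 + sqrt K)\<close> as soon as
  \<open>\<parallel>T f\<parallel>^2 \<le> K \<parallel>f\<parallel>^2\<close> for all \<open>f\<close> of mean zero.

  The bound \<open>K \<le> m |G| / ((p-1)/2)\<close> is a multiplicity argument. Take a mean-zero maximiser of
  \<open>\<parallel>T f\<parallel>/\<parallel>f\<parallel>\<close>. Since \<open>T\<close> commutes with right translations and the conjugates of the
  unipotent \<open>u\<close> generate \<open>G\<close>, some right translate has a nonzero component on which right
  multiplication by \<open>u\<close> acts by a nontrivial \<open>p\<close>-th root of unity \<open>\<omega>^j\<close>, and this component is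
  again a maximiser. The diagonal matrix \<open>diag(1/s, s)\<close> conjugates \<open>u\<close> to \<open>u^(s^2)\<close>,
  so translating by these matrices for \<open>s = 1 .. (p-1)/2\<close> gives maximisers with the distinct
  eigenvalues \<open>\<omega>^(j s^2)\<close>, hence orthogonal ones; Bessel's inequality against the indicators of
  the sets \<open>A^-1 y\<close> shows that their number times the top eigenvalue is at most \<open>m |G|\<close>.
  With \<open>|G| \<le> p^3\<close> this gives \<open>m \<le> 3 p^(8/3)\<close>.
\<close>

definition l2_inner :: "'a set \<Rightarrow> ('a \<Rightarrow> complex) \<Rightarrow> ('a \<Rightarrow> complex) \<Rightarrow> complex" where
  "l2_inner X f g = (\<Sum>x\<in>X. f x * cnj (g x))"

definition l2_norm_sq :: "'a set \<Rightarrow> ('a \<Rightarrow> complex) \<Rightarrow> real" where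
  "l2_norm_sq X f = (\<Sum>x\<in>X. (cmod (f x))\<^sup>2)"

lemma l2_inner_self: "complex_of_real (l2_norm_sq X f) = l2_inner X f f"
  unfolding l2_norm_sq_def l2_inner_def by (simp add: complex_norm_square del: of_real_power)

lemma l2_norm_sq_nonneg: "l2_norm_sq X f \<ge> 0"
  unfolding l2_norm_sq_def by (simp add: sum_nonneg)

lemma l2_norm_sq_eq_0D: "finite X \<Longrightarrow> l2_norm_sq X f = 0 \<Longrightarrow> x \<in> X \<Longrightarrow> f x = 0"
  unfolding l2_norm_sq_def by (subst (asm) sum_nonneg_eq_0_iff) auto

lemma l2_inner_cong:
  "(\<And>x. x \<in> X \<Longrightarrow> f x = f' x) \<Longrightarrow> (\<And>x. x \<in> X \<Longrightarrow> g x = g' x) \<Longrightarrow> l2_inner X f g = l2_inner X f' g'"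
  unfolding l2_inner_def by simp

lemma l2_norm_sq_cong: "(\<And>x. x \<in> X \<Longrightarrow> f x = f' x) \<Longrightarrow> l2_norm_sq X f = l2_norm_sq X f'"
  unfolding l2_norm_sq_def by simp

lemma l2_inner_sum_left: "l2_inner X (\<lambda>x. \<Sum>j\<in>J. v j x) w = (\<Sum>j\<in>J. l2_inner X (v j) w)"
  unfolding l2_inner_def by (simp add: sum_distrib_right sum.swap[of _ J])

lemma l2_inner_sum_right: "l2_inner X w (\<lambda>x. \<Sum>j\<in>J. v j x) = (\<Sum>j\<in>J. l2_inner X w (v j))"
  unfolding l2_inner_def by (simp add: cnj_sum sum_distrib_left sum.swap[of _ J])

lemma l2_inner_scale_left: "l2_inner X (\<lambda>x. c * f x) g = c * l2_inner X f g"
  unfolding l2_inner_def by (simp add: sum_distrib_left mult.assoc)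

lemma l2_inner_scale_right: "l2_inner X f (\<lambda>x. c * g x) = cnj c * l2_inner X f g"
  unfolding l2_inner_def by (simp add: sum_distrib_left algebra_simps)

lemma l2_inner_diff_left: "l2_inner X (\<lambda>x. f x - g x) h = l2_inner X f h - l2_inner X g h"
  unfolding l2_inner_def by (simp add: sum_subtractf algebra_simps)

lemma l2_inner_diff_right: "l2_inner X h (\<lambda>x. f x - g x) = l2_inner X h f - l2_inner X h g"
  unfolding l2_inner_def by (simp add: sum_subtractf algebra_simps)

lemma l2_inner_commute: "l2_inner X g f = cnj (l2_inner X f g)"
  unfolding l2_inner_def by (simp add: cnj_sum mult.commute)

lemma l2_norm_sq_scale: "l2_norm_sq X (\<lambda>x. c * f x) = (cmod c)\<^sup>2 * l2_norm_sq X f"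
  unfolding l2_norm_sq_def by (simp add: sum_distrib_left norm_mult power_mult_distrib)

lemma l2_inner_orthogonal_sum:
  assumes "finite J" and orth: "\<And>i j. i \<in> J \<Longrightarrow> j \<in> J \<Longrightarrow> i \<noteq> j \<Longrightarrow> l2_inner X (v i) (v j) = 0"
  shows "l2_inner X (\<lambda>x. \<Sum>j\<in>J. c j * v j x) (\<lambda>x. \<Sum>j\<in>J. c j * v j x)
       = (\<Sum>j\<in>J. c j * cnj (c j) * l2_inner X (v j) (v j))"
proof -
  have "l2_inner X (\<lambda>x. \<Sum>j\<in>J. c j * v j x) (\<lambda>x. \<Sum>j\<in>J. c j * v j x)
      = (\<Sum>i\<in>J. \<Sum>j\<in>J. c i * cnj (c j) * l2_inner X (v i) (v j))"
    by (simp add: l2_inner_sum_left l2_inner_sum_right l2_inner_scale_left l2_inner_scale_right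
        sum_distrib_left mult.assoc)
  also have "\<dots> = (\<Sum>i\<in>J. \<Sum>j\<in>{i}. c i * cnj (c j) * l2_inner X (v i) (v j))"
    by (intro sum.cong refl sum.mono_neutral_right) (use assms in auto)
  finally show ?thesis by simp
qed

lemma l2_norm_sq_orthogonal_sum:
  assumes "finite J" and "\<And>i j. i \<in> J \<Longrightarrow> j \<in> J \<Longrightarrow> i \<noteq> j \<Longrightarrow> l2_inner X (v i) (v j) = 0"
  shows "l2_norm_sq X (\<lambda>x. \<Sum>j\<in>J. v j x) = (\<Sum>j\<in>J. l2_norm_sq X (v j))"
proof -
  have "complex_of_real (l2_norm_sq X (\<lambda>x. \<Sum>j\<in>J. v j x)) = complex_of_real (\<Sum>j\<in>J. l2_norm_sq X (v j))"
    using l2_inner_orthogonal_sum[OF assms, where c = "\<lambda>_. 1"] by (simp add: l2_inner_self)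
  then show ?thesis by (simp only: of_real_eq_iff)
qed

lemma bessel_inequality:
  assumes "finite J" and orth: "\<And>i j. i \<in> J \<Longrightarrow> j \<in> J \<Longrightarrow> i \<noteq> j \<Longrightarrow> l2_inner X (v i) (v j) = 0"
    and pos: "\<And>j. j \<in> J \<Longrightarrow> l2_norm_sq X (v j) > 0"
  shows "(\<Sum>j\<in>J. (cmod (l2_inner X k (v j)))\<^sup>2 / l2_norm_sq X (v j)) \<le> l2_norm_sq X k"
proof -
  define Q where "Q = (\<Sum>j\<in>J. (cmod (l2_inner X k (v j)))\<^sup>2 / l2_norm_sq X (v j))"
  define c where "c j = l2_inner X k (v j) / complex_of_real (l2_norm_sq X (v j))" for j
  define s where "s x = (\<Sum>j\<in>J. c j * v j x)" for x
  have coeff: "cnj (c j) * l2_inner X k (v j) = complex_of_real ((cmod (l2_inner X k (v j)))\<^sup>2 / l2_norm_sq X (v j))"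
    for j unfolding c_def by (simp add: complex_norm_square mult.commute del: of_real_power)
  have ks: "l2_inner X k s = complex_of_real Q"
    unfolding s_def Q_def by (simp add: l2_inner_sum_right l2_inner_scale_right coeff)
  have ss: "l2_inner X s s = complex_of_real Q"
  proof -
    have "c j * cnj (c j) * l2_inner X (v j) (v j) = cnj (c j) * l2_inner X k (v j)" if "j \<in> J" for j
      using pos[OF that] unfolding c_def by (simp add: l2_inner_self[symmetric])
    then show ?thesis
      unfolding s_def Q_def by (simp add: l2_inner_orthogonal_sum[OF assms(1) orth] coeff)
  qed
  have "complex_of_real (l2_norm_sq X (\<lambda>x. k x - s x)) = complex_of_real (l2_norm_sq X k - Q)"
    using ks ss by (simp add: l2_inner_self l2_inner_diff_left l2_inner_diff_right l2_inner_commute[of X s k])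
  then show ?thesis
    using l2_norm_sq_nonneg[of X "\<lambda>x. k x - s x"] unfolding Q_def by (simp only: of_real_eq_iff)
qed

lemma norm_sum_image_le_sqrt_l2_norm_sq:
  assumes X: "finite X" and L: "finite L" "inj_on h L" "h ` L \<subseteq> X"
  shows "cmod (\<Sum>l\<in>L. F (h l)) \<le> sqrt (real (card L) * l2_norm_sq X F)"
proof -
  have "(\<Sum>l\<in>L. 1 * cmod (F (h l)))\<^sup>2 \<le> (\<Sum>l\<in>L. 1\<^sup>2) * (\<Sum>l\<in>L. (cmod (F (h l)))\<^sup>2)"
    by (rule Cauchy_Schwarz_ineq_sum)
  moreover have "(\<Sum>l\<in>L. (cmod (F (h l)))\<^sup>2) = (\<Sum>y\<in>h ` L. (cmod (F y))\<^sup>2)"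
    by (simp add: sum.reindex[OF L(2)])
  moreover have "\<dots> \<le> l2_norm_sq X F"
    unfolding l2_norm_sq_def by (rule sum_mono2[OF X L(3)]) simp
  ultimately have "(\<Sum>l\<in>L. cmod (F (h l)))\<^sup>2 \<le> real (card L) * l2_norm_sq X F"
    by (simp add: order_trans[OF _ mult_left_mono])
  then have "(\<Sum>l\<in>L. cmod (F (h l))) \<le> sqrt (real (card L) * l2_norm_sq X F)"
    by (rule real_le_rsqrt)
  then show ?thesis using norm_sum[of "\<lambda>l. F (h l)" L] by linarith
qed

lemma centered_indicator:
  assumes X: "finite X" "X \<noteq> {}" and B: "B \<subseteq> X"
  defines "g \<equiv> \<lambda>x. complex_of_real (indicator B x - real (card B) / real (card X))"
  shows "sum g X = 0" and "l2_norm_sq X g \<le> real (card B)"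
proof -
  define \<beta> where "\<beta> = real (card B) / real (card X)"
  have n: "real (card X) > 0" using X by (simp add: card_gt_0_iff)
  have ind: "(\<Sum>x\<in>X. indicator B x :: real) = real (card B)"
    unfolding indicator_def using X(1) B by (simp add: Int_absorb1 Collect_mem_eq)
  show "sum g X = 0"
    unfolding g_def using n by (simp add: sum_subtractf ind flip: of_real_sum)
  have "l2_norm_sq X g = (\<Sum>x\<in>X. indicator B x - 2 * \<beta> * indicator B x + \<beta>\<^sup>2)"
    unfolding l2_norm_sq_def g_def \<beta>_def[symmetric]
    by (intro sum.cong refl) (auto simp: indicator_def power2_diff norm_of_real simp del: of_real_diff)
  also have "\<dots> = real (card B) - 2 * \<beta> * real (card B) + real (card X) * \<beta>\<^sup>2"
    by (simp add: sum.distrib sum_subtractf ind sum_distrib_left[symmetric])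
  also have "\<dots> = real (card B) - \<beta> * real (card B)"
    using n unfolding \<beta>_def by (simp add: power2_eq_square field_simps)
  also have "\<dots> \<le> real (card B)" unfolding \<beta>_def by simp
  finally show "l2_norm_sq X g \<le> real (card B)" .
qed

lemma compact_mean_zero_unit_sphere:
  assumes "finite X"
  shows "compact {f :: 'a \<Rightarrow> complex. (\<forall>x. x \<notin> X \<longrightarrow> f x = 0) \<and> sum f X = 0 \<and> l2_norm_sq X f = 1}"
    (is "compact ?S")
proof -
  define K :: "('a \<Rightarrow> complex) set" where "K = PiE UNIV (\<lambda>x. if x \<in> X then cball 0 1 else {0})"
  have "compactin (product_topology (\<lambda>_. euclidean) UNIV) K"
    unfolding K_def by (subst compactin_PiE) (auto simp: compactin_euclidean_iff)
  then have K: "compact K" by (simp add: euclidean_product_topology compactin_euclidean_iff)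
  have S: "?S = K \<inter> {f. sum f X = 0} \<inter> {f. l2_norm_sq X f = 1}"
  proof -
    have "cmod (f x) \<le> 1" if "l2_norm_sq X f = 1" "x \<in> X" for f x
    proof -
      have "(cmod (f x))\<^sup>2 \<le> 1\<^sup>2"
        using member_le_sum[of x X "\<lambda>x. (cmod (f x))\<^sup>2"] that assms unfolding l2_norm_sq_def by simp
      then show ?thesis by (rule power2_le_imp_le) simp
    qed
    then show ?thesis unfolding K_def by (auto simp: PiE_iff split: if_splits)
  qed
  have sum: "continuous_on UNIV (\<lambda>f::'a \<Rightarrow> complex. sum f X)"
    by (intro continuous_intros continuous_on_product_coordinates)
  have norm: "continuous_on UNIV (\<lambda>f::'a \<Rightarrow> complex. l2_norm_sq X f)"
    unfolding l2_norm_sq_def by (intro continuous_intros continuous_on_product_coordinates)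
  show ?thesis
    unfolding S by (intro compact_Int_closed closed_Collect_eq K sum norm continuous_on_const)
qed

definition unit_root :: "nat \<Rightarrow> complex" where
  "unit_root n = exp (2 * of_real pi * \<i> / of_nat n)"

lemma unit_root_pow: "unit_root n ^ k = exp (2 * of_real pi * \<i> * of_nat k / of_nat n)"
  unfolding unit_root_def by (simp add: exp_of_nat_mult[symmetric] mult_ac)

lemma norm_unit_root_pow: "cmod (unit_root n ^ k) = 1"
  unfolding unit_root_pow by (simp add: norm_exp_eq_Re)

lemma cnj_unit_root_pow_mult: "cnj (unit_root n ^ k) * unit_root n ^ k = 1"
  using norm_unit_root_pow[of n k] by (metis complex_norm_square mult.commute of_real_1 power_one)

lemma unit_root_pow_eq_iff: "n > 0 \<Longrightarrow> unit_root n ^ j = unit_root n ^ k \<longleftrightarrow> j mod n = k mod n"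
  unfolding unit_root_pow by (rule complex_root_unity_eq) simp

lemma unit_root_pow_eq_1_iff: "n > 0 \<Longrightarrow> unit_root n ^ k = 1 \<longleftrightarrow> n dvd k"
  using unit_root_pow_eq_iff[of n k 0] by (simp add: dvd_eq_mod_eq_0)

lemma unit_root_pow_self: "n > 0 \<Longrightarrow> unit_root n ^ n = 1"
  by (simp add: unit_root_pow_eq_1_iff)

lemma sum_cnj_unit_root_pow:
  assumes "k < n"
  shows "(\<Sum>j<n. cnj (unit_root n) ^ (j * k)) = (if k = 0 then of_nat n else 0)"
proof (cases "k = 0")
  case False
  define z where "z = cnj (unit_root n ^ k)"
  have "unit_root n ^ k \<noteq> 1"
    using assms False by (simp add: unit_root_pow_eq_1_iff nat_dvd_not_less)
  then have "z \<noteq> 1" unfolding z_def by (metis complex_cnj_one complex_cnj_cnj)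
  moreover have "z ^ n = 1"
    using assms unfolding z_def
    by (simp flip: complex_cnj_power power_mult add: mult.commute[of k] power_mult unit_root_pow_self)
  ultimately have "(\<Sum>j<n. z ^ j) = 0" using geometric_sum[of z n] by simp
  then show ?thesis
    using False unfolding z_def by (simp add: complex_cnj_power power_mult mult.commute[of _ k])
qed simp

lemma unit_root_pow_mult_cnj_eq_1_iff:
  assumes "n > 0"
  shows "unit_root n ^ s * cnj (unit_root n ^ t) = 1 \<longleftrightarrow> s mod n = t mod n"
proof
  assume eq: "unit_root n ^ s * cnj (unit_root n ^ t) = 1"
  have "unit_root n ^ s = unit_root n ^ s * (cnj (unit_root n ^ t) * unit_root n ^ t)"
    by (simp only: cnj_unit_root_pow_mult mult_1_right)
  also have "\<dots> = unit_root n ^ t" by (simp only: mult.assoc[symmetric] eq mult_1)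
  finally show "s mod n = t mod n" using unit_root_pow_eq_iff[OF assms] by blast
next
  assume "s mod n = t mod n"
  then have "unit_root n ^ s = unit_root n ^ t" using unit_root_pow_eq_iff[OF assms] by blast
  then show "unit_root n ^ s * cnj (unit_root n ^ t) = 1"
    by (metis cnj_unit_root_pow_mult mult.commute)
qed

definition right_translate :: "('a, 'b) monoid_scheme \<Rightarrow> 'a \<Rightarrow> ('a \<Rightarrow> complex) \<Rightarrow> 'a \<Rightarrow> complex" where
  "right_translate G g f = (\<lambda>x. f (x \<otimes>\<^bsub>G\<^esub> g))"

definition conv_set :: "('a, 'b) monoid_scheme \<Rightarrow> 'a set \<Rightarrow> ('a \<Rightarrow> complex) \<Rightarrow> 'a \<Rightarrow> complex" where
  "conv_set G A f = (\<lambda>y. \<Sum>a\<in>A. f (inv\<^bsub>G\<^esub> a \<otimes>\<^bsub>G\<^esub> y))"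

text \<open>In the lemmas below \<open>\<sigma>\<close> is the maximum of \<open>\<parallel>conv_set G A f\<parallel>^2 / \<parallel>f\<parallel>^2\<close> over mean-zero
  \<open>f\<close>; where this is needed it is assumed as the hypothesis \<open>bound\<close>.\<close>

definition extremal :: "('a, 'b) monoid_scheme \<Rightarrow> 'a set \<Rightarrow> real \<Rightarrow> ('a \<Rightarrow> complex) \<Rightarrow> bool" where
  "extremal G A \<sigma> f \<longleftrightarrow> sum f (carrier G) = 0 \<and>
     l2_norm_sq (carrier G) (conv_set G A f) = \<sigma> * l2_norm_sq (carrier G) f"

locale finite_group = group +
  assumes finite_carrier: "finite (carrier G)"
begin

lemma bij_betw_right_mult: "g \<in> carrier G \<Longrightarrow> bij_betw (\<lambda>x. x \<otimes> g) (carrier G) (carrier G)"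
  by (rule bij_betwI[where g = "\<lambda>x. x \<otimes> inv g"]) (auto simp: m_assoc)

lemma l2_inner_right_translate:
  "g \<in> carrier G \<Longrightarrow> l2_inner (carrier G) (right_translate G g f) (right_translate G g h) = l2_inner (carrier G) f h"
  unfolding l2_inner_def right_translate_def
  using sum.reindex_bij_betw[OF bij_betw_right_mult, of g "\<lambda>x. f x * cnj (h x)"] by simp

lemma l2_norm_sq_right_translate:
  "g \<in> carrier G \<Longrightarrow> l2_norm_sq (carrier G) (right_translate G g f) = l2_norm_sq (carrier G) f"
  using l2_inner_right_translate[of g f f] by (metis l2_inner_self of_real_eq_iff)

lemma sum_right_translate: "g \<in> carrier G \<Longrightarrow> sum (right_translate G g f) (carrier G) = sum f (carrier G)"
  unfolding right_translate_def using sum.reindex_bij_betw[OF bij_betw_right_mult, of g f] by simp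

context
  fixes A assumes A_subset: "A \<subseteq> carrier G"
begin

lemma conv_set_cong:
  "(\<And>x. x \<in> carrier G \<Longrightarrow> f x = f' x) \<Longrightarrow> y \<in> carrier G \<Longrightarrow> conv_set G A f y = conv_set G A f' y"
  unfolding conv_set_def using A_subset by (intro sum.cong) auto

lemma conv_set_right_translate:
  "g \<in> carrier G \<Longrightarrow> y \<in> carrier G \<Longrightarrow> conv_set G A (right_translate G g f) y = conv_set G A f (y \<otimes> g)"
  unfolding conv_set_def right_translate_def using A_subset by (intro sum.cong) (auto simp: m_assoc)

lemma conv_set_scale: "conv_set G A (\<lambda>x. c * f x) y = c * conv_set G A f y"
  unfolding conv_set_def by (simp add: sum_distrib_left)

lemma conv_set_sum: "conv_set G A (\<lambda>x. \<Sum>j\<in>J. v j x) y = (\<Sum>j\<in>J. conv_set G A (v j) y)"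
  unfolding conv_set_def by (rule sum.swap)

lemma conv_set_diff: "conv_set G A (\<lambda>x. f x - g x) y = conv_set G A f y - conv_set G A g y"
  unfolding conv_set_def by (simp add: sum_subtractf)

lemma conv_set_const: "conv_set G A (\<lambda>x. c) y = of_nat (card A) * c"
  unfolding conv_set_def by simp

lemma l2_norm_sq_conv_set_eq_0:
  assumes "l2_norm_sq (carrier G) f = 0"
  shows "l2_norm_sq (carrier G) (conv_set G A f) = 0"
proof -
  have "conv_set G A f y = conv_set G A (\<lambda>x. 0) y" if "y \<in> carrier G" for y
    using l2_norm_sq_eq_0D[OF finite_carrier assms] that by (intro conv_set_cong) auto
  then show ?thesis unfolding l2_norm_sq_def by (simp add: conv_set_def)
qed

lemma inj_on_inv_mult_right: "y \<in> carrier G \<Longrightarrow> inj_on (\<lambda>a. inv a \<otimes> y) A"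
  using A_subset by (intro inj_onI) (metis inv_closed inv_inv right_cancel subsetD)

lemma conv_set_eq_l2_inner_indicator:
  assumes y: "y \<in> carrier G"
  shows "conv_set G A f y = l2_inner (carrier G) f (indicator ((\<lambda>a. inv a \<otimes> y) ` A))"
proof -
  have sub: "(\<lambda>a. inv a \<otimes> y) ` A \<subseteq> carrier G" using A_subset y by auto
  have "l2_inner (carrier G) f (indicator ((\<lambda>a. inv a \<otimes> y) ` A))
      = (\<Sum>x\<in>carrier G. if x \<in> (\<lambda>a. inv a \<otimes> y) ` A then f x else 0)"
    unfolding l2_inner_def by (intro sum.cong) auto
  also have "\<dots> = (\<Sum>x\<in>(\<lambda>a. inv a \<otimes> y) ` A. f x)"
    unfolding sum.inter_restrict[OF finite_carrier, symmetric] Int_absorb1[OF sub] ..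
  also have "\<dots> = conv_set G A f y"
    unfolding conv_set_def by (simp add: sum.reindex[OF inj_on_inv_mult_right[OF y]])
  finally show ?thesis by simp
qed

lemma l2_norm_sq_indicator_translate:
  assumes y: "y \<in> carrier G"
  shows "l2_norm_sq (carrier G) (indicator ((\<lambda>a. inv a \<otimes> y) ` A)) = real (card A)"
proof -
  have sub: "(\<lambda>a. inv a \<otimes> y) ` A \<subseteq> carrier G" using A_subset y by auto
  have "l2_norm_sq (carrier G) (indicator ((\<lambda>a. inv a \<otimes> y) ` A))
      = (\<Sum>x\<in>carrier G. if x \<in> (\<lambda>a. inv a \<otimes> y) ` A then 1 else 0)"
    unfolding l2_norm_sq_def by (intro sum.cong) auto
  also have "\<dots> = real (card A)"
    unfolding sum.inter_restrict[OF finite_carrier, symmetric] Int_absorb1[OF sub]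
    by (simp add: card_image[OF inj_on_inv_mult_right[OF y]])
  finally show ?thesis .
qed

end

lemma conv_set_bound_from_unit_sphere:
  assumes A: "A \<subseteq> carrier G"
    and unit: "\<And>f. (\<forall>x. x \<notin> carrier G \<longrightarrow> f x = 0) \<Longrightarrow> sum f (carrier G) = 0 \<Longrightarrow>
      l2_norm_sq (carrier G) f = 1 \<Longrightarrow> l2_norm_sq (carrier G) (conv_set G A f) \<le> \<sigma>"
    and f: "sum f (carrier G) = 0"
  shows "l2_norm_sq (carrier G) (conv_set G A f) \<le> \<sigma> * l2_norm_sq (carrier G) f"
proof (cases "l2_norm_sq (carrier G) f = 0")
  case True
  then show ?thesis using l2_norm_sq_conv_set_eq_0[OF A] by simp
next
  case False
  then have pos: "l2_norm_sq (carrier G) f > 0" using l2_norm_sq_nonneg[of "carrier G" f] by simp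
  define c :: complex where "c = of_real (1 / sqrt (l2_norm_sq (carrier G) f))"
  define f' where "f' x = (if x \<in> carrier G then c * f x else 0)" for x
  have c: "(cmod c)\<^sup>2 * l2_norm_sq (carrier G) f = 1"
    unfolding c_def using pos by (simp add: power_divide norm_divide)
  have "l2_norm_sq (carrier G) f' = (cmod c)\<^sup>2 * l2_norm_sq (carrier G) f"
    unfolding f'_def by (simp add: l2_norm_sq_cong[of _ _ "\<lambda>x. c * f x"] l2_norm_sq_scale)
  moreover have "sum f' (carrier G) = c * sum f (carrier G)"
    unfolding f'_def by (simp add: sum_distrib_left)
  ultimately have "l2_norm_sq (carrier G) (conv_set G A f') \<le> \<sigma>"
    using unit[of f'] c f by (simp add: f'_def)
  moreover have "l2_norm_sq (carrier G) (conv_set G A f') = (cmod c)\<^sup>2 * l2_norm_sq (carrier G) (conv_set G A f)"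
  proof -
    have "conv_set G A f' y = c * conv_set G A f y" if "y \<in> carrier G" for y
      using conv_set_cong[OF A _ that, of f' "\<lambda>x. c * f x"] conv_set_scale[OF A] by (simp add: f'_def)
    then show ?thesis by (simp add: l2_norm_sq_cong[of _ _ "\<lambda>y. c * conv_set G A f y"] l2_norm_sq_scale)
  qed
  ultimately have "(cmod c)\<^sup>2 * l2_norm_sq (carrier G) (conv_set G A f) * l2_norm_sq (carrier G) f
      \<le> \<sigma> * l2_norm_sq (carrier G) f"
    using pos by (intro mult_right_mono) auto
  moreover have "(cmod c)\<^sup>2 * l2_norm_sq (carrier G) (conv_set G A f) * l2_norm_sq (carrier G) f
      = l2_norm_sq (carrier G) (conv_set G A f)"
    using c by (simp add: mult.commute mult.left_commute)
  ultimately show ?thesis by simp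
qed

lemma conv_set_extremal_exists:
  assumes A: "A \<subseteq> carrier G" and nontrivial: "carrier G \<noteq> {\<one>}"
  obtains \<sigma> f0 where "extremal G A \<sigma> f0" "l2_norm_sq (carrier G) f0 = 1"
    "\<And>f. sum f (carrier G) = 0 \<Longrightarrow> l2_norm_sq (carrier G) (conv_set G A f) \<le> \<sigma> * l2_norm_sq (carrier G) f"
proof -
  define S where "S = {f :: 'a \<Rightarrow> complex. (\<forall>x. x \<notin> carrier G \<longrightarrow> f x = 0) \<and>
    sum f (carrier G) = 0 \<and> l2_norm_sq (carrier G) f = 1}"
  obtain x where x: "x \<in> carrier G" "x \<noteq> \<one>" using nontrivial by blast
  define g0 :: "'a \<Rightarrow> complex" where
    "g0 = (\<lambda>y. (indicator {\<one>} y - indicator {x} y) / sqrt 2)"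
  have "g0 \<in> S"
  proof -
    have "g0 y = 0" if "y \<notin> carrier G" for y
      using that x unfolding g0_def by (auto simp: indicator_def)
    moreover have "sum g0 (carrier G) = (\<Sum>y\<in>{\<one>, x}. g0 y)"
      by (rule sum.mono_neutral_right) (use finite_carrier x in \<open>auto simp: g0_def\<close>)
    moreover have "l2_norm_sq (carrier G) g0 = (\<Sum>y\<in>{\<one>, x}. (cmod (g0 y))\<^sup>2)"
      unfolding l2_norm_sq_def
      by (rule sum.mono_neutral_right) (use finite_carrier x in \<open>auto simp: g0_def\<close>)
    ultimately show ?thesis
      using x unfolding S_def by (simp add: g0_def power_divide norm_divide)
  qed
  have "continuous_on UNIV (\<lambda>f. l2_norm_sq (carrier G) (conv_set G A f))"
    unfolding l2_norm_sq_def conv_set_def by (intro continuous_intros continuous_on_product_coordinates)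
  then have "compact ((\<lambda>f. l2_norm_sq (carrier G) (conv_set G A f)) ` S)"
    using compact_mean_zero_unit_sphere[OF finite_carrier] unfolding S_def
    by (intro compact_continuous_image) (auto intro: continuous_on_subset)
  then obtain f0 where f0: "f0 \<in> S"
    and max: "\<And>f. f \<in> S \<Longrightarrow> l2_norm_sq (carrier G) (conv_set G A f) \<le> l2_norm_sq (carrier G) (conv_set G A f0)"
    using compact_attains_sup[of "(\<lambda>f. l2_norm_sq (carrier G) (conv_set G A f)) ` S"] \<open>g0 \<in> S\<close> by blast
  show ?thesis
  proof (rule that)
    show "extremal G A (l2_norm_sq (carrier G) (conv_set G A f0)) f0" "l2_norm_sq (carrier G) f0 = 1"
      using f0 unfolding S_def extremal_def by auto
    show "l2_norm_sq (carrier G) (conv_set G A f) \<le> l2_norm_sq (carrier G) (conv_set G A f0) * l2_norm_sq (carrier G) f"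
      if "sum f (carrier G) = 0" for f
      by (rule conv_set_bound_from_unit_sphere[OF A _ that]) (use max in \<open>auto simp: S_def\<close>)
  qed
qed

lemma extremal_right_translate:
  assumes A: "A \<subseteq> carrier G" and g: "g \<in> carrier G" and f: "extremal G A \<sigma> f"
  shows "extremal G A \<sigma> (right_translate G g f)"
proof -
  have "l2_norm_sq (carrier G) (conv_set G A (right_translate G g f))
      = l2_norm_sq (carrier G) (right_translate G g (conv_set G A f))"
    by (rule l2_norm_sq_cong)
      (simp add: conv_set_right_translate[OF A g] right_translate_def[of _ _ "conv_set G A f"])
  then show ?thesis
    using f g unfolding extremal_def by (simp add: l2_norm_sq_right_translate sum_right_translate)
qed

end

definition right_eigen :: "('a, 'b) monoid_scheme \<Rightarrow> 'a \<Rightarrow> complex \<Rightarrow> ('a \<Rightarrow> complex) \<Rightarrow> bool" where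
  "right_eigen G u z f \<longleftrightarrow> (\<forall>x\<in>carrier G. f (x \<otimes>\<^bsub>G\<^esub> u) = z * f x)"

definition eigen_component ::
    "('a, 'b) monoid_scheme \<Rightarrow> nat \<Rightarrow> 'a \<Rightarrow> nat \<Rightarrow> ('a \<Rightarrow> complex) \<Rightarrow> 'a \<Rightarrow> complex" where
  "eigen_component G p u j f = (\<lambda>x. \<Sum>k<p. cnj (unit_root p) ^ (j * k) * f (x \<otimes>\<^bsub>G\<^esub> u [^]\<^bsub>G\<^esub> k))"

lemma (in group) right_eigen_pow:
  assumes f: "right_eigen G u z f" and u: "u \<in> carrier G" and x: "x \<in> carrier G"
  shows "f (x \<otimes> u [^] (k::nat)) = z ^ k * f x"
proof (induction k)
  case (Suc k)
  have "f (x \<otimes> u [^] Suc k) = f ((x \<otimes> u [^] k) \<otimes> u)" using x u by (simp add: m_assoc)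
  also have "\<dots> = z * f (x \<otimes> u [^] k)" using f x u unfolding right_eigen_def by simp
  finally show ?case using Suc by simp
qed (use x in simp)

lemma (in group) right_eigen_conjugate:
  assumes u: "u \<in> carrier G" and d: "d \<in> carrier G" and conj: "inv d \<otimes> u \<otimes> d = u [^] (k::nat)"
    and h: "right_eigen G u z h"
  shows "right_eigen G u (z ^ k) (right_translate G d h)"
  unfolding right_eigen_def
proof
  fix x assume x: "x \<in> carrier G"
  have "x \<otimes> u \<otimes> d = (x \<otimes> d) \<otimes> (inv d \<otimes> u \<otimes> d)"
    using x u d by (simp add: m_assoc[symmetric]) (simp add: m_assoc)
  then have "right_translate G d h (x \<otimes> u) = h ((x \<otimes> d) \<otimes> u [^] k)"
    unfolding right_translate_def conj by simp
  also have "\<dots> = z ^ k * right_translate G d h x"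
    unfolding right_translate_def by (rule right_eigen_pow[OF h u]) (use x d in simp)
  finally show "right_translate G d h (x \<otimes> u) = z ^ k * right_translate G d h x" .
qed

context finite_group
begin

lemma right_eigen_orthogonal:
  assumes u: "u \<in> carrier G" and f: "right_eigen G u z f" and g: "right_eigen G u w g"
    and zw: "z * cnj w \<noteq> 1"
  shows "l2_inner (carrier G) f g = 0"
proof -
  have "l2_inner (carrier G) f g = l2_inner (carrier G) (right_translate G u f) (right_translate G u g)"
    using l2_inner_right_translate[OF u] by simp
  also have "\<dots> = l2_inner (carrier G) (\<lambda>x. z * f x) (\<lambda>x. w * g x)"
    using f g unfolding right_eigen_def right_translate_def by (intro l2_inner_cong) auto
  also have "\<dots> = (z * cnj w) * l2_inner (carrier G) f g"
    by (simp add: l2_inner_scale_left l2_inner_scale_right)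
  finally have "(1 - z * cnj w) * l2_inner (carrier G) f g = 0" by (simp add: algebra_simps)
  then show ?thesis using zw by simp
qed

lemma card_extremal_family_le:
  assumes A: "A \<subseteq> carrier G" and I: "finite I"
    and ext: "\<And>i. i \<in> I \<Longrightarrow> extremal G A \<sigma> (v i)"
    and pos: "\<And>i. i \<in> I \<Longrightarrow> l2_norm_sq (carrier G) (v i) > 0"
    and orth: "\<And>i i'. i \<in> I \<Longrightarrow> i' \<in> I \<Longrightarrow> i \<noteq> i' \<Longrightarrow> l2_inner (carrier G) (v i) (v i') = 0"
  shows "real (card I) * \<sigma> \<le> real (card A) * real (card (carrier G))"
proof -
  have pointwise: "(\<Sum>i\<in>I. (cmod (conv_set G A (v i) y))\<^sup>2 / l2_norm_sq (carrier G) (v i)) \<le> real (card A)"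
    if y: "y \<in> carrier G" for y
    using bessel_inequality[OF I orth pos, where k = "indicator ((\<lambda>a. inv a \<otimes> y) ` A)"]
    by (simp add: conv_set_eq_l2_inner_indicator[OF A y] l2_norm_sq_indicator_translate[OF A y]
        l2_inner_commute[of "carrier G" "v _"])
  have "real (card I) * \<sigma> = (\<Sum>i\<in>I. \<sigma>)" by simp
  also have "\<dots> = (\<Sum>i\<in>I. l2_norm_sq (carrier G) (conv_set G A (v i)) / l2_norm_sq (carrier G) (v i))"
    using ext pos unfolding extremal_def by (intro sum.cong) (auto simp: less_imp_neq[symmetric])
  also have "\<dots> = (\<Sum>y\<in>carrier G. \<Sum>i\<in>I. (cmod (conv_set G A (v i) y))\<^sup>2 / l2_norm_sq (carrier G) (v i))"
    unfolding l2_norm_sq_def[of _ "conv_set G A _"] by (simp add: sum_divide_distrib sum.swap[of _ I])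
  also have "\<dots> \<le> (\<Sum>y\<in>carrier G. real (card A))" by (rule sum_mono) (rule pointwise)
  finally show ?thesis by (simp add: mult.commute)
qed

end

locale prime_order_element = finite_group +
  fixes p :: nat and u :: 'a
  assumes prime_p: "prime p" and u_closed: "u \<in> carrier G"
    and u_pow_p: "u [^] p = \<one>" and u_ne_one: "u \<noteq> \<one>"
begin

lemma p_pos: "p > 0"
  using prime_p prime_gt_0_nat by blast

lemma eigen_component_right_eigen: "right_eigen G u (unit_root p ^ j) (eigen_component G p u j f)"
  unfolding right_eigen_def
proof
  fix x assume x: "x \<in> carrier G"
  define h where "h k = unit_root p ^ j * (cnj (unit_root p) ^ (j * k) * f (x \<otimes> u [^] k))" for k
  have "cnj (unit_root p) ^ (j * p) = 1"
    using unit_root_pow_self[OF p_pos]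
    by (simp flip: complex_cnj_power add: power_mult mult.commute[of j])
  then have hp: "h p = h 0" unfolding h_def using u_pow_p x by simp
  have shift: "unit_root p ^ j * cnj (unit_root p) ^ (j * Suc k) = cnj (unit_root p) ^ (j * k)" for k
  proof -
    have "cnj (unit_root p) ^ (j * Suc k) = cnj (unit_root p ^ j) * cnj (unit_root p) ^ (j * k)"
      by (simp add: power_add complex_cnj_power)
    then have "unit_root p ^ j * cnj (unit_root p) ^ (j * Suc k)
        = (cnj (unit_root p ^ j) * unit_root p ^ j) * cnj (unit_root p) ^ (j * k)"
      by (simp only: ac_simps)
    then show ?thesis by (simp only: cnj_unit_root_pow_mult mult_1)
  qed
  have "eigen_component G p u j f (x \<otimes> u) = (\<Sum>k<p. h (Suc k))"
    unfolding eigen_component_def h_def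
  proof (intro sum.cong refl)
    fix k
    have e: "x \<otimes> u \<otimes> u [^] k = x \<otimes> u [^] Suc k"
      using x u_closed by (metis m_assoc nat_pow_Suc2 nat_pow_closed)
    show "cnj (unit_root p) ^ (j * k) * f (x \<otimes> u \<otimes> u [^] k)
        = unit_root p ^ j * (cnj (unit_root p) ^ (j * Suc k) * f (x \<otimes> u [^] Suc k))"
      by (simp only: e mult.assoc[symmetric] shift)
  qed
  also have "\<dots> = (\<Sum>k<p. h k)"
    using hp sum.lessThan_Suc_shift[of h p] by (simp add: add.commute)
  also have "\<dots> = unit_root p ^ j * eigen_component G p u j f x"
    unfolding h_def eigen_component_def by (simp add: sum_distrib_left)
  finally show "eigen_component G p u j f (x \<otimes> u) = unit_root p ^ j * eigen_component G p u j f x" .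
qed

lemma sum_eigen_components:
  assumes x: "x \<in> carrier G"
  shows "(\<Sum>j<p. eigen_component G p u j f x) = of_nat p * f x"
proof -
  have "(\<Sum>j<p. eigen_component G p u j f x)
      = (\<Sum>k<p. \<Sum>j<p. cnj (unit_root p) ^ (j * k) * f (x \<otimes> u [^] k))"
    unfolding eigen_component_def by (rule sum.swap)
  also have "\<dots> = (\<Sum>k<p. (\<Sum>j<p. cnj (unit_root p) ^ (j * k)) * f (x \<otimes> u [^] k))"
    by (simp add: sum_distrib_right)
  also have "\<dots> = (\<Sum>k<p. if k = 0 then of_nat p * f x else 0)"
    by (intro sum.cong refl) (simp add: sum_cnj_unit_root_pow x)
  finally show ?thesis using p_pos by simp
qed

lemma sum_eigen_component_eq_0:
  assumes "sum f (carrier G) = 0"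
  shows "sum (eigen_component G p u j f) (carrier G) = 0"
proof -
  have "sum (eigen_component G p u j f) (carrier G)
      = (\<Sum>k<p. cnj (unit_root p) ^ (j * k) * sum (right_translate G (u [^] k) f) (carrier G))"
    unfolding eigen_component_def right_translate_def
    by (simp add: sum.swap[of _ "carrier G"] sum_distrib_left)
  then show ?thesis using assms u_closed by (simp add: sum_right_translate)
qed

lemma eigen_components_orthogonal:
  assumes "i < p" "j < p" "i \<noteq> j"
  shows "l2_inner (carrier G) (eigen_component G p u i f) (eigen_component G p u j g) = 0"
  using assms
  by (intro right_eigen_orthogonal[OF u_closed eigen_component_right_eigen eigen_component_right_eigen])
    (simp add: unit_root_pow_mult_cnj_eq_1_iff[OF p_pos] del: complex_cnj_power)

lemma l2_norm_sq_eigen_components: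
  "(real p)\<^sup>2 * l2_norm_sq (carrier G) f = (\<Sum>j<p. l2_norm_sq (carrier G) (eigen_component G p u j f))"
proof -
  have "(real p)\<^sup>2 * l2_norm_sq (carrier G) f = l2_norm_sq (carrier G) (\<lambda>x. of_nat p * f x)"
    by (simp add: l2_norm_sq_scale)
  also have "\<dots> = l2_norm_sq (carrier G) (\<lambda>x. \<Sum>j<p. eigen_component G p u j f x)"
    by (intro l2_norm_sq_cong) (simp add: sum_eigen_components)
  also have "\<dots> = (\<Sum>j<p. l2_norm_sq (carrier G) (eigen_component G p u j f))"
    by (intro l2_norm_sq_orthogonal_sum eigen_components_orthogonal) auto
  finally show ?thesis .
qed

lemma conv_set_eigen_component:
  assumes A: "A \<subseteq> carrier G" and y: "y \<in> carrier G"
  shows "conv_set G A (eigen_component G p u j f) y = eigen_component G p u j (conv_set G A f) y"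
proof -
  have "conv_set G A (eigen_component G p u j f) y
      = (\<Sum>k<p. cnj (unit_root p) ^ (j * k) * conv_set G A (right_translate G (u [^] k) f) y)"
    unfolding eigen_component_def
    by (simp add: conv_set_sum[OF A] conv_set_scale[OF A] right_translate_def)
  then show ?thesis
    unfolding eigen_component_def using u_closed y by (simp add: conv_set_right_translate[OF A])
qed

text \<open>Since \<open>conv_set\<close> commutes with taking components, the vanishing defect
  \<open>\<sigma> \<parallel>f\<parallel>^2 - \<parallel>conv_set G A f\<parallel>^2\<close> is the sum of the nonnegative defects of the components.\<close>

lemma extremal_eigen_component:
  assumes A: "A \<subseteq> carrier G"
    and bound: "\<And>g. sum g (carrier G) = 0 \<Longrightarrow>
      l2_norm_sq (carrier G) (conv_set G A g) \<le> \<sigma> * l2_norm_sq (carrier G) g"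
    and f: "extremal G A \<sigma> f" and j: "j < p"
  shows "extremal G A \<sigma> (eigen_component G p u j f)"
proof -
  define v where "v i = eigen_component G p u i f" for i
  have mean_zero: "sum (v i) (carrier G) = 0" for i
    using f unfolding v_def extremal_def by (simp add: sum_eigen_component_eq_0)
  have defect: "\<sigma> * l2_norm_sq (carrier G) (v i) - l2_norm_sq (carrier G) (conv_set G A (v i)) \<ge> 0" for i
    using bound[OF mean_zero] by simp
  have "l2_norm_sq (carrier G) (conv_set G A (v i))
      = l2_norm_sq (carrier G) (eigen_component G p u i (conv_set G A f))" for i
    unfolding v_def by (intro l2_norm_sq_cong conv_set_eigen_component[OF A])
  then have "(\<Sum>i<p. \<sigma> * l2_norm_sq (carrier G) (v i) - l2_norm_sq (carrier G) (conv_set G A (v i)))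
      = (real p)\<^sup>2 * (\<sigma> * l2_norm_sq (carrier G) f - l2_norm_sq (carrier G) (conv_set G A f))"
    unfolding v_def
    by (simp add: sum_subtractf sum_distrib_left[symmetric] l2_norm_sq_eigen_components[symmetric]
        algebra_simps)
  also have "\<dots> = 0" using f unfolding extremal_def by simp
  finally have "\<forall>i\<in>{..<p}. \<sigma> * l2_norm_sq (carrier G) (v i) - l2_norm_sq (carrier G) (conv_set G A (v i)) = 0"
    by (subst (asm) sum_nonneg_eq_0_iff) (use defect in auto)
  then show ?thesis using mean_zero j unfolding extremal_def v_def by simp
qed

lemma right_invariant_if_nontrivial_components_vanish:
  assumes vanish: "\<And>j x. 0 < j \<Longrightarrow> j < p \<Longrightarrow> x \<in> carrier G \<Longrightarrow> eigen_component G p u j f x = 0"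
    and x: "x \<in> carrier G"
  shows "f (x \<otimes> u) = f x"
proof -
  have "of_nat p * f y = eigen_component G p u 0 f y" if "y \<in> carrier G" for y
  proof -
    have "of_nat p * f y = (\<Sum>j<p. eigen_component G p u j f y)"
      using sum_eigen_components[OF that] by simp
    also have "\<dots> = (\<Sum>j\<in>{0}. eigen_component G p u j f y)"
      by (rule sum.mono_neutral_right) (use vanish that p_pos in auto)
    finally show ?thesis by simp
  qed
  moreover have "eigen_component G p u 0 f (x \<otimes> u) = eigen_component G p u 0 f x"
    using eigen_component_right_eigen[of 0 f] x unfolding right_eigen_def by simp
  ultimately have "of_nat p * f (x \<otimes> u) = of_nat p * f x" using x u_closed by simp
  then show ?thesis using p_pos by simp
qed

end

locale conjugate_powers = prime_order_element +
  fixes I :: "nat set" and d :: "nat \<Rightarrow> 'a" and e :: "nat \<Rightarrow> nat"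
  assumes generated_by_conjugates: "generate G ((\<lambda>g. inv g \<otimes> u \<otimes> g) ` carrier G) = carrier G"
    and finite_I: "finite I"
    and d_closed: "\<And>i. i \<in> I \<Longrightarrow> d i \<in> carrier G"
    and d_conj: "\<And>i. i \<in> I \<Longrightarrow> inv (d i) \<otimes> u \<otimes> d i = u [^] e i"
    and e_inj_mod: "\<And>i i'. i \<in> I \<Longrightarrow> i' \<in> I \<Longrightarrow> [e i = e i'] (mod p) \<Longrightarrow> i = i'"
begin

lemma const_if_invariant_under_conjugates:
  assumes inv: "\<And>y g. y \<in> carrier G \<Longrightarrow> g \<in> carrier G \<Longrightarrow> f (y \<otimes> (inv g \<otimes> u \<otimes> g)) = f y"
    and x: "x \<in> carrier G"
  shows "f x = f \<one>"
proof -
  define H where "H = {g \<in> carrier G. \<forall>y\<in>carrier G. f (y \<otimes> g) = f y}"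
  have "subgroup H G"
  proof (rule subgroupI)
    show "H \<subseteq> carrier G" "H \<noteq> {}" unfolding H_def by auto
  next
    fix g assume g: "g \<in> H"
    have "f (y \<otimes> inv g) = f y" if "y \<in> carrier G" for y
    proof -
      have "f (y \<otimes> inv g) = f ((y \<otimes> inv g) \<otimes> g)" using g that unfolding H_def by simp
      also have "(y \<otimes> inv g) \<otimes> g = y" using g that unfolding H_def by (simp add: m_assoc)
      finally show ?thesis .
    qed
    then show "inv g \<in> H" using g unfolding H_def by simp
  next
    fix g h assume "g \<in> H" "h \<in> H"
    then show "g \<otimes> h \<in> H" unfolding H_def by (simp add: m_assoc[symmetric])
  qed
  moreover have "(\<lambda>g. inv g \<otimes> u \<otimes> g) ` carrier G \<subseteq> H"
    unfolding H_def using inv u_closed by auto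
  ultimately have "x \<in> H"
    using generate_subgroup_incl generated_by_conjugates x by blast
  then have "f (\<one> \<otimes> x) = f \<one>" unfolding H_def by blast
  then show ?thesis using x by simp
qed

text \<open>Otherwise \<open>f\<close> would be invariant under all conjugates of \<open>u\<close>, hence constant, hence zero.\<close>

lemma nontrivial_eigen_component_exists:
  assumes f: "sum f (carrier G) = 0" and f_nonzero: "l2_norm_sq (carrier G) f \<noteq> 0"
  shows "\<exists>g\<in>carrier G. \<exists>j. 0 < j \<and> j < p \<and>
    l2_norm_sq (carrier G) (eigen_component G p u j (right_translate G g f)) \<noteq> 0"
proof (rule ccontr)
  assume none: "\<not> ?thesis"
  have vanish: "eigen_component G p u j (right_translate G g f) x = 0"
    if "g \<in> carrier G" "0 < j" "j < p" "x \<in> carrier G" for g j x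
  proof -
    have "l2_norm_sq (carrier G) (eigen_component G p u j (right_translate G g f)) = 0"
      using none that(1-3) by auto
    then show ?thesis by (rule l2_norm_sq_eq_0D[OF finite_carrier _ that(4)])
  qed
  have u_invariant: "right_translate G g f (x \<otimes> u) = right_translate G g f x"
    if "g \<in> carrier G" "x \<in> carrier G" for g x
    by (rule right_invariant_if_nontrivial_components_vanish[OF vanish[OF that(1)] that(2)])
  have "f (y \<otimes> (inv g \<otimes> u \<otimes> g)) = f y" if "y \<in> carrier G" "g \<in> carrier G" for y g
  proof -
    have "y \<otimes> (inv g \<otimes> u \<otimes> g) = (y \<otimes> inv g) \<otimes> u \<otimes> g"
      using that u_closed by (simp add: m_assoc)
    moreover have "(y \<otimes> inv g) \<otimes> g = y"
      using that by (simp add: m_assoc)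
    ultimately show ?thesis
      using u_invariant[of g "y \<otimes> inv g"] that unfolding right_translate_def by simp
  qed
  then have const: "f x = f \<one>" if "x \<in> carrier G" for x
    by (rule const_if_invariant_under_conjugates[OF _ that])
  have "sum f (carrier G) = (\<Sum>x\<in>carrier G. f \<one>)"
    by (rule sum.cong[OF refl]) (rule const)
  then have "f \<one> = 0"
    using f finite_carrier one_closed by (auto simp: card_0_eq)
  have "l2_norm_sq (carrier G) f = (\<Sum>x\<in>carrier G. (cmod (f \<one>))\<^sup>2)"
    unfolding l2_norm_sq_def by (rule sum.cong[OF refl]) (simp only: const)
  then show False using \<open>f \<one> = 0\<close> f_nonzero by simp
qed

lemma extremal_eigenfunction_exists:
  assumes A: "A \<subseteq> carrier G"
    and bound: "\<And>g. sum g (carrier G) = 0 \<Longrightarrow>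
      l2_norm_sq (carrier G) (conv_set G A g) \<le> \<sigma> * l2_norm_sq (carrier G) g"
    and f: "extremal G A \<sigma> f" and f_nonzero: "l2_norm_sq (carrier G) f \<noteq> 0"
  obtains h j where "extremal G A \<sigma> h" "l2_norm_sq (carrier G) h > 0" "0 < j" "j < p"
    "right_eigen G u (unit_root p ^ j) h"
proof -
  obtain g j where g: "g \<in> carrier G" and j: "0 < j" "j < p"
    and nonzero: "l2_norm_sq (carrier G) (eigen_component G p u j (right_translate G g f)) \<noteq> 0"
    using nontrivial_eigen_component_exists f_nonzero f unfolding extremal_def by blast
  show ?thesis
  proof (rule that[OF _ _ j eigen_component_right_eigen])
    show "extremal G A \<sigma> (eigen_component G p u j (right_translate G g f))"
      by (intro extremal_eigen_component[OF A bound] extremal_right_translate[OF A g f] j)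
    show "l2_norm_sq (carrier G) (eigen_component G p u j (right_translate G g f)) > 0"
      using nonzero l2_norm_sq_nonneg by (simp add: order_less_le)
  qed
qed

text \<open>The translates of an extremal eigenfunction by the \<open>d i\<close> are extremal eigenfunctions with the
  pairwise distinct eigenvalues \<open>\<omega>^(j e i)\<close>, so \<open>\<sigma>\<close> has multiplicity at least \<open>card I\<close>.\<close>

theorem conv_set_spectral_bound:
  assumes A: "A \<subseteq> carrier G" and f: "sum f (carrier G) = 0"
  shows "l2_norm_sq (carrier G) (conv_set G A f) * real (card I)
    \<le> real (card A) * real (card (carrier G)) * l2_norm_sq (carrier G) f"
proof -
  have "carrier G \<noteq> {\<one>}" using u_closed u_ne_one by blast
  then obtain \<sigma> f0 where f0: "extremal G A \<sigma> f0" "l2_norm_sq (carrier G) f0 = 1"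
    and bound: "\<And>g. sum g (carrier G) = 0 \<Longrightarrow>
      l2_norm_sq (carrier G) (conv_set G A g) \<le> \<sigma> * l2_norm_sq (carrier G) g"
    using conv_set_extremal_exists[OF A] by metis
  obtain h j where h: "extremal G A \<sigma> h" "l2_norm_sq (carrier G) h > 0"
    and j: "0 < j" "j < p" and h_eigen: "right_eigen G u (unit_root p ^ j) h"
    using extremal_eigenfunction_exists[OF A bound f0(1)] f0(2) by auto
  define v where "v i = right_translate G (d i) h" for i
  have v_eigen: "right_eigen G u (unit_root p ^ (j * e i)) (v i)" if "i \<in> I" for i
    unfolding v_def power_mult
    by (rule right_eigen_conjugate[OF u_closed d_closed[OF that] d_conj[OF that] h_eigen])
  have "coprime j p"
    using j prime_imp_coprime_nat[OF prime_p] by (simp add: nat_dvd_not_less coprime_commute)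
  then have distinct: "(j * e i) mod p \<noteq> (j * e i') mod p" if "i \<in> I" "i' \<in> I" "i \<noteq> i'" for i i'
    using that e_inj_mod cong_mult_lcancel_nat unfolding cong_def by blast
  have orth: "l2_inner (carrier G) (v i) (v i') = 0" if "i \<in> I" "i' \<in> I" "i \<noteq> i'" for i i'
    using distinct[OF that]
    by (intro right_eigen_orthogonal[OF u_closed v_eigen[OF that(1)] v_eigen[OF that(2)]])
      (simp add: unit_root_pow_mult_cnj_eq_1_iff[OF p_pos] del: complex_cnj_power)
  have "real (card I) * \<sigma> \<le> real (card A) * real (card (carrier G))"
  proof (rule card_extremal_family_le[OF A finite_I _ _ orth])
    show "extremal G A \<sigma> (v i)" if "i \<in> I" for i
      unfolding v_def by (rule extremal_right_translate[OF A d_closed[OF that] h(1)])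
    show "l2_norm_sq (carrier G) (v i) > 0" if "i \<in> I" for i
      unfolding v_def using h(2) d_closed[OF that] by (simp add: l2_norm_sq_right_translate)
  qed
  then have "real (card I) * \<sigma> * l2_norm_sq (carrier G) f
      \<le> real (card A) * real (card (carrier G)) * l2_norm_sq (carrier G) f"
    by (intro mult_right_mono l2_norm_sq_nonneg)
  moreover have "l2_norm_sq (carrier G) (conv_set G A f) * real (card I)
      \<le> \<sigma> * l2_norm_sq (carrier G) f * real (card I)"
    using bound[OF f] by (intro mult_right_mono) auto
  ultimately show ?thesis by (simp add: mult_ac)
qed

end

definition is_3_matching ::
    "('a, 'b) monoid_scheme \<Rightarrow> nat \<Rightarrow> (nat \<Rightarrow> 'a) \<Rightarrow> (nat \<Rightarrow> 'a) \<Rightarrow> (nat \<Rightarrow> 'a) \<Rightarrow> bool" where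
  "is_3_matching G m a b c \<longleftrightarrow>
     (\<forall>i\<in>{1..m}. a i \<in> carrier G \<and> b i \<in> carrier G \<and> c i \<in> carrier G) \<and>
     (\<forall>i\<in>{1..m}. \<forall>j\<in>{1..m}. \<forall>l\<in>{1..m}. (a i \<otimes>\<^bsub>G\<^esub> b j \<otimes>\<^bsub>G\<^esub> c l = \<one>\<^bsub>G\<^esub> \<longleftrightarrow> i = j \<and> j = l))"

lemma mult_3_matching_iff: "mult_3_matching G m \<longleftrightarrow> (\<exists>a b c. is_3_matching G m a b c)"
  unfolding mult_3_matching_def is_3_matching_def by blast

lemma is_3_matching_closed:
  "is_3_matching G m a b c \<Longrightarrow> i \<in> {1..m} \<Longrightarrow> a i \<in> carrier G \<and> b i \<in> carrier G \<and> c i \<in> carrier G"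
  unfolding is_3_matching_def by simp

lemma is_3_matching_eq_one_iff:
  "is_3_matching G m a b c \<Longrightarrow> i \<in> {1..m} \<Longrightarrow> j \<in> {1..m} \<Longrightarrow> l \<in> {1..m} \<Longrightarrow>
    a i \<otimes>\<^bsub>G\<^esub> b j \<otimes>\<^bsub>G\<^esub> c l = \<one>\<^bsub>G\<^esub> \<longleftrightarrow> i = j \<and> j = l"
  unfolding is_3_matching_def by simp

lemma is_3_matching_inj_a:
  assumes "is_3_matching G m a b c"
  shows "inj_on a {1..m}"
proof (rule inj_onI)
  fix i j assume ij: "i \<in> {1..m}" "j \<in> {1..m}" "a i = a j"
  have "a j \<otimes>\<^bsub>G\<^esub> b i \<otimes>\<^bsub>G\<^esub> c i = \<one>\<^bsub>G\<^esub>"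
    using is_3_matching_eq_one_iff[OF assms ij(1) ij(1) ij(1)] ij(3) by simp
  then show "i = j" using is_3_matching_eq_one_iff[OF assms ij(2) ij(1) ij(1)] by simp
qed

lemma is_3_matching_inj_b:
  assumes "is_3_matching G m a b c"
  shows "inj_on b {1..m}"
proof (rule inj_onI)
  fix i j assume ij: "i \<in> {1..m}" "j \<in> {1..m}" "b i = b j"
  have "a i \<otimes>\<^bsub>G\<^esub> b j \<otimes>\<^bsub>G\<^esub> c i = \<one>\<^bsub>G\<^esub>"
    using is_3_matching_eq_one_iff[OF assms ij(1) ij(1) ij(1)] ij(3) by simp
  then show "i = j" using is_3_matching_eq_one_iff[OF assms ij(1) ij(2) ij(1)] by blast
qed

lemma is_3_matching_inj_c:
  assumes "is_3_matching G m a b c"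
  shows "inj_on c {1..m}"
proof (rule inj_onI)
  fix i j assume ij: "i \<in> {1..m}" "j \<in> {1..m}" "c i = c j"
  have "a i \<otimes>\<^bsub>G\<^esub> b i \<otimes>\<^bsub>G\<^esub> c j = \<one>\<^bsub>G\<^esub>"
    using is_3_matching_eq_one_iff[OF assms ij(1) ij(1) ij(1)] ij(3) by simp
  then show "i = j" using is_3_matching_eq_one_iff[OF assms ij(1) ij(1) ij(2)] by simp
qed

lemma (in group) triple_product_eq_one_iff:
  assumes "a \<in> carrier G" "b \<in> carrier G" "c \<in> carrier G"
  shows "a \<otimes> b \<otimes> c = \<one> \<longleftrightarrow> b = inv a \<otimes> inv c"
proof -
  have "a \<otimes> b \<otimes> c = \<one> \<longleftrightarrow> a \<otimes> b = inv c"
  proof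
    assume "a \<otimes> b \<otimes> c = \<one>"
    then show "a \<otimes> b = inv c" using assms by (metis inv_equality m_closed)
  qed (use assms in simp)
  also have "\<dots> \<longleftrightarrow> b = inv a \<otimes> inv c" using assms by (metis inv_closed inv_solve_left)
  finally show ?thesis .
qed

lemma (in group) is_3_matching_middle_iff:
  assumes match: "is_3_matching G m a b c" and i: "i \<in> {1..m}" and l: "l \<in> {1..m}"
  shows "inv (a i) \<otimes> inv (c l) \<in> b ` {1..m} \<longleftrightarrow> i = l"
proof -
  have key: "b j = inv (a i) \<otimes> inv (c l) \<longleftrightarrow> i = j \<and> j = l" if "j \<in> {1..m}" for j
  proof -
    have "b j = inv (a i) \<otimes> inv (c l) \<longleftrightarrow> a i \<otimes> b j \<otimes> c l = \<one>"
      using triple_product_eq_one_iff is_3_matching_closed[OF match] i l that by simp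
    also have "\<dots> \<longleftrightarrow> i = j \<and> j = l" by (rule is_3_matching_eq_one_iff[OF match i that l])
    finally show ?thesis .
  qed
  show ?thesis
  proof
    assume "inv (a i) \<otimes> inv (c l) \<in> b ` {1..m}"
    then obtain j where "j \<in> {1..m}" "b j = inv (a i) \<otimes> inv (c l)" by force
    then show "i = l" using key by blast
  next
    assume "i = l"
    then have "b i = inv (a i) \<otimes> inv (c l)" using key[OF i] by simp
    then show "inv (a i) \<otimes> inv (c l) \<in> b ` {1..m}" using i by force
  qed
qed

lemma mult_3_matching_le_card:
  assumes "finite (carrier G)" and "mult_3_matching G m"
  shows "m \<le> card (carrier G)"
proof -
  obtain a b c where match: "is_3_matching G m a b c" using assms(2) mult_3_matching_iff by blast
  then have "a ` {1..m} \<subseteq> carrier G" using is_3_matching_closed by blast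
  then have "card (a ` {1..m}) \<le> card (carrier G)" using assms(1) by (rule card_mono[rotated])
  then show ?thesis using card_image[OF is_3_matching_inj_a[OF match]] by simp
qed

lemma mult_3_matching_M:
  assumes "finite (carrier G)"
  shows "mult_3_matching G (M G)"
proof -
  have "{m. mult_3_matching G m} \<subseteq> {..card (carrier G)}"
    using mult_3_matching_le_card[OF assms] by auto
  then have "finite {m. mult_3_matching G m}" by (rule finite_subset) simp
  moreover have "mult_3_matching G 0" unfolding mult_3_matching_def by simp
  ultimately show ?thesis unfolding M_def using Max_in[of "{m. mult_3_matching G m}"] by auto
qed

lemma (in group) conv_set_indicator_middle:
  assumes match: "is_3_matching G m a b c" and l: "l \<in> {1..m}"
  shows "conv_set G (a ` {1..m}) (indicator (b ` {1..m})) (inv (c l)) = (1 :: complex)"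
proof -
  have "conv_set G (a ` {1..m}) (indicator (b ` {1..m})) (inv (c l))
      = (\<Sum>i\<in>{1..m}. indicator (b ` {1..m}) (inv (a i) \<otimes> inv (c l)))"
    unfolding conv_set_def by (subst sum.reindex[OF is_3_matching_inj_a[OF match]]) simp
  also have "\<dots> = (\<Sum>i\<in>{1..m}. if i = l then 1 else 0)"
  proof (rule sum.cong[OF refl])
    fix i assume i: "i \<in> {1..m}"
    show "indicator (b ` {1..m}) (inv (a i) \<otimes> inv (c l)) = (if i = l then 1 else 0)"
      using is_3_matching_middle_iff[OF match i l] unfolding indicator_def by (simp only: of_bool_def)
  qed
  finally show ?thesis using l by simp
qed

text \<open>With \<open>g\<close> the centred indicator of \<open>{b_j}\<close>, each of the \<open>m\<close> values \<open>conv_set g (c_l^-1)\<close>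
  equals \<open>1 - m^2/|G|\<close>, while Cauchy-Schwarz and the bound on \<open>conv_set\<close> give
  \<open>|\<Sum>_l conv_set g (c_l^-1)| \<le> m sqrt K\<close>.\<close>

lemma (in finite_group) is_3_matching_size_bound:
  assumes match: "is_3_matching G m a b c" and K: "0 \<le> K"
    and bound: "\<And>f. sum f (carrier G) = 0 \<Longrightarrow>
      l2_norm_sq (carrier G) (conv_set G (a ` {1..m}) f) \<le> K * l2_norm_sq (carrier G) f"
  shows "real m ^ 2 \<le> real (card (carrier G)) * (1 + sqrt K)"
proof (cases "m = 0")
  case False
  define n where "n = card (carrier G)"
  define A where "A = a ` {1..m}"
  define B where "B = b ` {1..m}"
  define g where "g = (\<lambda>x. complex_of_real (indicator B x - real (card B) / real n))"
  have A: "A \<subseteq> carrier G" and B: "B \<subseteq> carrier G"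
    using is_3_matching_closed[OF match] unfolding A_def B_def by auto
  have card_A: "card A = m"
    unfolding A_def using card_image[OF is_3_matching_inj_a[OF match]] by simp
  have card_B: "card B = m"
    unfolding B_def using card_image[OF is_3_matching_inj_b[OF match]] by simp
  have n: "real n > 0" unfolding n_def using finite_carrier by (auto simp: card_gt_0_iff)
  have g: "sum g (carrier G) = 0" "l2_norm_sq (carrier G) g \<le> real m"
    using centered_indicator[OF finite_carrier _ B] card_B unfolding g_def n_def by auto
  have conv_g: "conv_set G A g (inv (c l)) = complex_of_real (1 - real m * real m / real n)"
    if l: "l \<in> {1..m}" for l
  proof -
    have "conv_set G A g (inv (c l)) = conv_set G A (indicator B) (inv (c l))
        - conv_set G A (\<lambda>_. complex_of_real (real (card B) / real n)) (inv (c l))"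
      unfolding g_def by (simp add: conv_set_diff[OF A, symmetric] of_real_indicator)
    then show ?thesis
      using conv_set_indicator_middle[OF match l, folded A_def B_def] card_A card_B
      by (simp add: conv_set_const[OF A])
  qed
  have c_inv_closed: "(\<lambda>l. inv (c l)) ` {1..m} \<subseteq> carrier G"
    using is_3_matching_closed[OF match] by auto
  have inj_c: "inj_on (\<lambda>l. inv (c l)) {1..m}"
    using is_3_matching_inj_c[OF match] is_3_matching_closed[OF match]
    by (intro inj_onI) (metis inj_onD inv_inv)
  have "(\<Sum>l\<in>{1..m}. conv_set G A g (inv (c l))) = of_real (real m * (1 - real m * real m / real n))"
    using conv_g by simp
  then have "real m * \<bar>1 - real m * real m / real n\<bar> = cmod (\<Sum>l\<in>{1..m}. conv_set G A g (inv (c l)))"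
    by (simp only: norm_of_real abs_mult abs_of_nat)
  also have "\<dots> \<le> sqrt (real m * l2_norm_sq (carrier G) (conv_set G A g))"
    using norm_sum_image_le_sqrt_l2_norm_sq[OF finite_carrier _ inj_c c_inv_closed] by simp
  also have "\<dots> \<le> sqrt (real m * (K * real m))"
    using bound[OF g(1), folded A_def] g(2) K
    by (intro real_sqrt_le_mono mult_left_mono) (auto intro: order_trans mult_left_mono)
  also have "\<dots> = real m * sqrt K"
    by (simp add: real_sqrt_mult)
  finally have "\<bar>1 - real m * real m / real n\<bar> \<le> sqrt K"
    using False by simp
  then have "real m * real m / real n \<le> 1 + sqrt K" by linarith
  then show ?thesis using n unfolding n_def by (simp add: power2_eq_square field_simps)
qed (simp add: K)

lemma matching_bound_arith:
  fixes m n k P :: real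
  assumes m: "0 \<le> m" and P: "1 \<le> P" and n: "0 \<le> n" "n \<le> P ^ 3" and k: "0 < k" "P \<le> 4 * k"
    and h: "m\<^sup>2 \<le> n * (1 + sqrt (m * n / k))"
  shows "m \<le> 3 * P powr (8/3)"
proof (cases "m \<le> 1")
  case True
  have "1 \<le> P powr (8/3)" using P by (simp add: ge_one_powr_ge_zero)
  then show ?thesis using True by linarith
next
  case False
  define t where "t = sqrt m"
  have t: "t \<ge> 1" "m = t\<^sup>2" unfolding t_def using False by auto
  have "m * n / k = (m * n) * (1 / k)" by simp
  also have "\<dots> \<le> (m * P ^ 3) * (4 / P)"
    using m n k P by (intro mult_mono) (auto simp: field_simps intro: mult_left_mono)
  also have "\<dots> = (2 * t * P)\<^sup>2" using P t by (simp add: power2_eq_square power3_eq_cube field_simps)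
  finally have "sqrt (m * n / k) \<le> sqrt ((2 * t * P)\<^sup>2)" by (rule real_sqrt_le_mono)
  also have "\<dots> = 2 * t * P" using t P by simp
  finally have "1 + sqrt (m * n / k) \<le> 1 + 2 * t * P" by simp
  then have "m\<^sup>2 \<le> P ^ 3 * (1 + 2 * t * P)"
    using h n t P by (smt (verit) mult_mono real_sqrt_ge_zero divide_nonneg_pos mult_nonneg_nonneg k(1) m)
  also have "\<dots> \<le> P ^ 3 * (3 * t * P)"
    using mult_mono[of 1 t 1 P] t P by (intro mult_left_mono) (auto simp: mult.commute)
  finally have "t ^ 3 * t \<le> 3 * P ^ 4 * t" using t by (simp add: power_mult_distrib algebra_simps eval_nat_numeral)
  then have t3: "t ^ 3 \<le> 3 * P ^ 4" using t by simp
  have "m ^ 3 = (t ^ 3)\<^sup>2" using t by (simp flip: power_mult)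
  also have "\<dots> \<le> (3 * P ^ 4)\<^sup>2" using t3 t by (intro power_mono) auto
  also have "\<dots> \<le> (3 * P powr (8/3)) ^ 3"
  proof -
    have "(P powr (8/3)) ^ 3 = P ^ 8" using P by (simp add: powr_power powr_realpow)
    then show ?thesis by (simp add: power_mult_distrib flip: power_mult)
  qed
  finally have "m ^ 3 \<le> (3 * P powr (8/3)) ^ 3" .
  then show ?thesis using power_mono_iff[of m "3 * P powr (8/3)" 3] m by simp
qed

lemma SL2_carrier: "(a, b, c, d) \<in> carrier (SL2 p) \<longleftrightarrow>
   0 \<le> a \<and> a < p \<and> 0 \<le> b \<and> b < p \<and> 0 \<le> c \<and> c < p \<and> 0 \<le> d \<and> d < p \<and> (a * d - b * c) mod p = 1"
  by (auto simp: SL2_def)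

lemma SL2_mult: "(a, b, c, d) \<otimes>\<^bsub>SL2 p\<^esub> (e, f, g, h) =
   ((a * e + b * g) mod p, (a * f + b * h) mod p, (c * e + d * g) mod p, (c * f + d * h) mod p)"
  by (simp add: SL2_def)

lemma SL2_one: "\<one>\<^bsub>SL2 p\<^esub> = (1, 0, 0, 1)"
  by (simp add: SL2_def)

lemma mod_eq_if_dvd_diff: "(p::int) dvd x - y \<Longrightarrow> 0 \<le> y \<Longrightarrow> y < p \<Longrightarrow> x mod p = y"
  by (metis mod_eq_dvd_iff mod_pos_pos_trivial)

lemma eq_if_dvd_diff: "(p::int) dvd x - y \<Longrightarrow> 0 \<le> x \<Longrightarrow> x < p \<Longrightarrow> 0 \<le> y \<Longrightarrow> y < p \<Longrightarrow> x = y"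
  by (metis mod_eq_if_dvd_diff mod_pos_pos_trivial)

lemma SL2_mult_closed:
  assumes p: "p > 1" and x: "x \<in> carrier (SL2 p)" and y: "y \<in> carrier (SL2 p)"
  shows "x \<otimes>\<^bsub>SL2 p\<^esub> y \<in> carrier (SL2 p)"
proof -
  obtain a b c d e f g h where xy: "x = (a, b, c, d)" "y = (e, f, g, h)" by (cases x, cases y) auto
  have det: "(a * d - b * c) mod p = 1" "(e * h - f * g) mod p = 1"
    using x y unfolding xy by (auto simp: SL2_carrier)
  have "((a*e + b*g) * (c*f + d*h) - (a*f + b*h) * (c*e + d*g)) = (a*d - b*c) * (e*h - f*g)"
    by (simp add: algebra_simps)
  then have "((a*e + b*g) * (c*f + d*h) - (a*f + b*h) * (c*e + d*g)) mod p = 1"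
    using det p by (metis mod_mult_eq mult_1 mod_pos_pos_trivial zero_less_one zero_le_one)
  then have "(((a*e + b*g) mod p) * ((c*f + d*h) mod p) - ((a*f + b*h) mod p) * ((c*e + d*g) mod p)) mod p = 1"
    by (metis mod_diff_eq mod_mult_eq)
  then show ?thesis unfolding xy SL2_mult SL2_carrier using p by simp
qed

lemma SL2_mult_assoc: "x \<otimes>\<^bsub>SL2 p\<^esub> y \<otimes>\<^bsub>SL2 p\<^esub> z = x \<otimes>\<^bsub>SL2 p\<^esub> (y \<otimes>\<^bsub>SL2 p\<^esub> z)"
proof -
  have left: "((x mod p) * y + (z mod p) * w) mod p = (x * y + z * w) mod p" for x y z w :: int
    by (metis mod_add_eq mod_mult_left_eq)
  have right: "(y * (x mod p) + w * (z mod p)) mod p = (y * x + w * z) mod p" for x y z w :: int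
    by (metis mod_add_eq mod_mult_right_eq)
  obtain a b c d e f g h i j k l where xyz: "x = (a, b, c, d)" "y = (e, f, g, h)" "z = (i, j, k, l)"
    by (cases x, cases y, cases z) auto
  show ?thesis
    unfolding xyz SL2_mult by (simp only: left right prod.inject) (simp add: algebra_simps)
qed

lemma SL2_adjugate:
  assumes p: "p > 1" and x: "(a, b, c, d) \<in> carrier (SL2 p)"
  shows "(d, (- b) mod p, (- c) mod p, a) \<in> carrier (SL2 p)"
    and "(d, (- b) mod p, (- c) mod p, a) \<otimes>\<^bsub>SL2 p\<^esub> (a, b, c, d) = \<one>\<^bsub>SL2 p\<^esub>"
proof -
  have r: "0 \<le> a" "a < p" "0 \<le> b" "b < p" "0 \<le> c" "c < p" "0 \<le> d" "d < p"
    and det: "(a * d - b * c) mod p = 1"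
    using x by (auto simp: SL2_carrier)
  have "(d * a - ((- b) mod p) * ((- c) mod p)) mod p = (d * a - (- b) * (- c)) mod p"
    by (metis mod_diff_right_eq mod_mult_eq)
  also have "\<dots> = 1" using det by (simp add: algebra_simps)
  finally show "(d, (- b) mod p, (- c) mod p, a) \<in> carrier (SL2 p)"
    unfolding SL2_carrier using r p by simp
  have left: "((x mod p) * y + z) mod p = (x * y + z) mod p" for x y z :: int
    by (metis mod_add_left_eq mod_mult_left_eq)
  have right: "(z + (x mod p) * y) mod p = (z + x * y) mod p" for x y z :: int
    by (metis mod_add_right_eq mod_mult_left_eq)
  have "(d * a + ((- b) mod p) * c) mod p = 1" "(((- c) mod p) * b + a * d) mod p = 1"
    using det by (simp_all only: left right) (simp_all add: algebra_simps)
  moreover have "(d * b + ((- b) mod p) * d) mod p = 0" "(((- c) mod p) * a + a * c) mod p = 0"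
    by (simp_all only: left right) (simp_all add: algebra_simps)
  ultimately show "(d, (- b) mod p, (- c) mod p, a) \<otimes>\<^bsub>SL2 p\<^esub> (a, b, c, d) = \<one>\<^bsub>SL2 p\<^esub>"
    by (simp add: SL2_mult SL2_one)
qed

lemma group_SL2:
  assumes p: "p > 1"
  shows "group (SL2 p)"
proof (rule groupI)
  show "\<one>\<^bsub>SL2 p\<^esub> \<in> carrier (SL2 p)" using p by (simp add: SL2_one SL2_carrier)
next
  fix x assume "x \<in> carrier (SL2 p)"
  moreover obtain a b c d where "x = (a, b, c, d)" by (cases x) auto
  ultimately show "\<exists>y\<in>carrier (SL2 p). y \<otimes>\<^bsub>SL2 p\<^esub> x = \<one>\<^bsub>SL2 p\<^esub>"
    using SL2_adjugate[OF p] by blast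
qed (auto simp: SL2_mult_closed[OF p] SL2_mult_assoc SL2_carrier SL2_mult SL2_one)

lemma finite_carrier_SL2: "finite (carrier (SL2 p))"
proof -
  have "carrier (SL2 p) \<subseteq> {0..<p} \<times> {0..<p} \<times> {0..<p} \<times> {0..<p}"
    by (auto simp: SL2_def)
  then show ?thesis by (rule finite_subset) simp
qed

lemma SL2_eq_by_first_column_and_b:
  assumes p: "prime p" and x: "(a, b, c, d) \<in> carrier (SL2 p)" and y: "(a, b, c, d') \<in> carrier (SL2 p)"
    and a: "a \<noteq> 0"
  shows "d = d'"
proof -
  have r: "0 \<le> a" "a < p" "0 \<le> d" "d < p" "0 \<le> d'" "d' < p"
    and "(a * d - b * c) mod p = (a * d' - b * c) mod p"
    using x y by (auto simp: SL2_carrier)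
  then have "p dvd a * (d - d')" by (simp add: mod_eq_dvd_iff algebra_simps)
  moreover have "\<not> p dvd a" using a r by (auto dest: zdvd_imp_le)
  ultimately have "p dvd d - d'" using p by (simp add: prime_dvd_mult_iff)
  then show ?thesis using r by (intro eq_if_dvd_diff) auto
qed

lemma SL2_eq_by_second_column_and_c:
  assumes p: "prime p" and x: "(0, b, c, d) \<in> carrier (SL2 p)" and y: "(0, b', c, d) \<in> carrier (SL2 p)"
  shows "b = b'"
proof -
  have r: "0 \<le> b" "b < p" "0 \<le> b'" "b' < p" and det: "(- (b * c)) mod p = 1"
    and eq: "(- (b * c)) mod p = (- (b' * c)) mod p"
    using x y by (auto simp: SL2_carrier)
  have "p dvd (- (b * c)) - (- (b' * c))" using eq by (simp only: mod_eq_dvd_iff)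
  then have "p dvd (b' - b) * c" by (simp add: algebra_simps)
  moreover have "\<not> p dvd c"
  proof
    assume "p dvd c"
    then show False using det by simp
  qed
  ultimately have "p dvd b' - b" using p by (simp add: prime_dvd_mult_iff)
  then show ?thesis using r by (intro eq_if_dvd_diff[symmetric]) auto
qed

lemma card_SL2_le:
  assumes p: "prime p"
  shows "card (carrier (SL2 p)) \<le> nat p ^ 3"
proof -
  define enc :: "int \<times> int \<times> int \<times> int \<Rightarrow> int \<times> int \<times> int" where
    "enc x = (case x of (a, b, c, d) \<Rightarrow> if a = 0 then (0, d, c) else (a, b, c))" for x
  have "inj_on enc (carrier (SL2 p))"
  proof (rule inj_onI)
    fix x y assume x: "x \<in> carrier (SL2 p)" and y: "y \<in> carrier (SL2 p)" and "enc x = enc y"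
    moreover obtain a b c d a' b' c' d' where "x = (a, b, c, d)" "y = (a', b', c', d')"
      by (cases x, cases y) auto
    ultimately show "x = y"
      using SL2_eq_by_first_column_and_b[OF p] SL2_eq_by_second_column_and_c[OF p]
      by (auto simp: enc_def split: if_splits)
  qed
  moreover have "enc ` carrier (SL2 p) \<subseteq> {0..<p} \<times> {0..<p} \<times> {0..<p}"
    by (auto simp: enc_def SL2_def split: if_splits)
  ultimately have "card (carrier (SL2 p)) \<le> card ({0..<p} \<times> {0..<p} \<times> {0..<p})"
    by (intro card_inj_on_le) auto
  also have "\<dots> = nat p ^ 3" by (simp add: card_cartesian_product power3_eq_cube)
  finally show ?thesis .
qed

definition upper_unipotent :: "int \<times> int \<times> int \<times> int" where
  "upper_unipotent = (1, 1, 0, 1)"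

definition diag_SL2 :: "int \<Rightarrow> int \<Rightarrow> int \<times> int \<times> int \<times> int" where
  "diag_SL2 p s = (modular_inverse p s, 0, 0, s)"

locale SL2_mod_prime =
  fixes p :: int
  assumes prime_p: "prime p"
begin

lemma p_gt_1: "p > 1"
  using prime_p prime_gt_1_int by blast

sublocale SL: group "SL2 p"
  by (rule group_SL2[OF p_gt_1])

lemma minus_one_sq_mod: "((p - 1) * (p - 1)) mod p = 1"
proof -
  have "(p - 1) * (p - 1) = 1 + (p - 2) * p" by (simp add: algebra_simps)
  then show ?thesis using p_gt_1 by simp
qed

lemma SL2_center_subset: "SL2_center p \<subseteq> carrier (SL2 p)"
  using p_gt_1 minus_one_sq_mod unfolding SL2_center_def by (auto simp: SL2_carrier)

lemma SL2_center_central: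
  assumes z: "z \<in> SL2_center p" and x: "x \<in> carrier (SL2 p)"
  shows "z \<otimes>\<^bsub>SL2 p\<^esub> x = x \<otimes>\<^bsub>SL2 p\<^esub> z"
proof -
  obtain a b c d where x_eq: "x = (a, b, c, d)" by (cases x) auto
  show ?thesis
  proof (cases "z = (1, 0, 0, 1)")
    case True
    then show ?thesis using SL.l_one[OF x] SL.r_one[OF x] by (simp add: SL2_one)
  next
    case False
    then have "z = (p - 1, 0, 0, p - 1)" using z by (simp add: SL2_center_def)
    then show ?thesis unfolding x_eq by (simp add: SL2_mult algebra_simps)
  qed
qed

lemma subgroup_SL2_center: "subgroup (SL2_center p) (SL2 p)"
proof (rule SL.subgroupI[OF SL2_center_subset])
  show "SL2_center p \<noteq> {}" by (simp add: SL2_center_def)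
next
  fix z assume z: "z \<in> SL2_center p"
  have minus_one_sq: "(p - 1, 0, 0, p - 1) \<otimes>\<^bsub>SL2 p\<^esub> (p - 1, 0, 0, p - 1) = \<one>\<^bsub>SL2 p\<^esub>"
    using minus_one_sq_mod by (simp add: SL2_mult SL2_one)
  then have minus_one_inv: "inv\<^bsub>SL2 p\<^esub> (p - 1, 0, 0, p - 1) = (p - 1, 0, 0, p - 1)"
    using SL2_center_subset by (intro SL.inv_equality) (auto simp: SL2_center_def)
  show "inv\<^bsub>SL2 p\<^esub> z \<in> SL2_center p"
    using z minus_one_inv SL.inv_one unfolding SL2_center_def by (auto simp: SL2_one)
  fix w assume "w \<in> SL2_center p"
  then show "z \<otimes>\<^bsub>SL2 p\<^esub> w \<in> SL2_center p"
    using z minus_one_sq SL2_center_subset SL.l_one SL.r_one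
    unfolding SL2_center_def SL2_one by auto
qed

sublocale center: normal "SL2_center p" "SL2 p"
proof -
  have "x \<otimes>\<^bsub>SL2 p\<^esub> z \<otimes>\<^bsub>SL2 p\<^esub> inv\<^bsub>SL2 p\<^esub> x \<in> SL2_center p"
    if x: "x \<in> carrier (SL2 p)" and z: "z \<in> SL2_center p" for x z
  proof -
    have "z \<in> carrier (SL2 p)" using z SL2_center_subset by blast
    then show ?thesis using z x by (simp add: SL2_center_central[OF z x, symmetric] SL.m_assoc)
  qed
  then show "SL2_center p \<lhd> SL2 p" using subgroup_SL2_center by (simp add: SL.normal_inv_iff)
qed

abbreviation proj :: "int \<times> int \<times> int \<times> int \<Rightarrow> (int \<times> int \<times> int \<times> int) set" where
  "proj x \<equiv> SL2_center p #>\<^bsub>SL2 p\<^esub> x"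

sublocale proj: group_hom "SL2 p" "PSL2 p" proj
  unfolding group_hom_def group_hom_axioms_def PSL2_def
  by (simp add: SL.is_group center.factorgroup_is_group center.r_coset_hom_Mod)

lemma carrier_PSL2: "carrier (PSL2 p) = proj ` carrier (SL2 p)"
  unfolding PSL2_def by (rule carrier_FactGroup)

lemma finite_group_PSL2: "finite_group (PSL2 p)"
  unfolding finite_group_def finite_group_axioms_def
  using proj.H.is_group finite_carrier_SL2 by (simp add: carrier_PSL2)

lemma card_PSL2_le: "card (carrier (PSL2 p)) \<le> nat p ^ 3"
  unfolding carrier_PSL2 using card_image_le[OF finite_carrier_SL2] card_SL2_le[OF prime_p] le_trans by blast

lemma upper_unipotent_closed: "upper_unipotent \<in> carrier (SL2 p)"
  using p_gt_1 by (simp add: upper_unipotent_def SL2_carrier)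

lemma upper_unipotent_pow: "upper_unipotent [^]\<^bsub>SL2 p\<^esub> (n::nat) = (1, int n mod p, 0, 1)"
proof (induction n)
  case 0
  then show ?case by (simp add: SL2_one)
next
  case (Suc n)
  then show ?case
    using p_gt_1 by (simp add: SL2_mult upper_unipotent_def mod_add_right_eq)
qed

lemma proj_upper_unipotent_ne_one: "proj upper_unipotent \<noteq> \<one>\<^bsub>PSL2 p\<^esub>"
proof
  assume "proj upper_unipotent = \<one>\<^bsub>PSL2 p\<^esub>"
  then have "upper_unipotent \<in> SL2_center p"
    using SL.rcos_self[OF upper_unipotent_closed subgroup_SL2_center] by (simp add: PSL2_def)
  then show False by (simp add: upper_unipotent_def SL2_center_def)
qed

lemma mult_modular_inverse_mod:
  assumes "0 < s" "s < p"
  shows "(s * modular_inverse p s) mod p = 1"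
proof -
  have "coprime s p"
    using assms prime_p by (simp add: prime_imp_coprime coprime_commute zdvd_not_zless)
  then show ?thesis
    using cong_modular_inverse1[of s p] p_gt_1 by (simp add: cong_def)
qed

lemma diag_SL2_closed: "0 < s \<Longrightarrow> s < p \<Longrightarrow> diag_SL2 p s \<in> carrier (SL2 p)"
  using mult_modular_inverse_mod p_gt_1
  by (simp add: diag_SL2_def SL2_carrier modular_inverse_int_nonneg modular_inverse_int_less mult.commute)

lemma diag_SL2_conj_upper_unipotent:
  assumes "0 < s" "int s < p"
  shows "inv\<^bsub>SL2 p\<^esub> (diag_SL2 p (int s)) \<otimes>\<^bsub>SL2 p\<^esub> upper_unipotent \<otimes>\<^bsub>SL2 p\<^esub> diag_SL2 p (int s)
    = upper_unipotent [^]\<^bsub>SL2 p\<^esub> (s\<^sup>2)"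
proof -
  define t where "t = modular_inverse p (int s)"
  have t: "0 \<le> t" "t < p" "(int s * t) mod p = 1"
    using mult_modular_inverse_mod[of "int s"] assms p_gt_1
    by (simp_all add: t_def modular_inverse_int_nonneg modular_inverse_int_less)
  have "inv\<^bsub>SL2 p\<^esub> (diag_SL2 p (int s)) = (int s, 0, 0, t)"
  proof (rule SL.inv_equality)
    show "(int s, 0, 0, t) \<otimes>\<^bsub>SL2 p\<^esub> diag_SL2 p (int s) = \<one>\<^bsub>SL2 p\<^esub>"
      using t by (simp add: diag_SL2_def t_def[symmetric] SL2_mult SL2_one mult.commute)
    show "(int s, 0, 0, t) \<in> carrier (SL2 p)" using t assms by (simp add: SL2_carrier)
  qed (use diag_SL2_closed assms in auto)
  moreover have "(int s, 0, 0, t) \<otimes>\<^bsub>SL2 p\<^esub> upper_unipotent \<otimes>\<^bsub>SL2 p\<^esub> (t, 0, 0, int s)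
      = (1, int (s\<^sup>2) mod p, 0, 1)"
    using t assms by (simp add: SL2_mult upper_unipotent_def power2_eq_square mult.commute)
  ultimately show ?thesis
    by (simp add: upper_unipotent_pow diag_SL2_def t_def[symmetric])
qed

lemma square_mod_inj:
  assumes "0 < s" "2 * int s < p" "0 < s'" "2 * int s' < p" "[s\<^sup>2 = s'\<^sup>2] (mod nat p)"
  shows "s = s'"
proof -
  have "[int (s\<^sup>2) = int (s'\<^sup>2)] (mod int (nat p))"
    using assms(5) by (simp only: cong_int_iff)
  then have "[(int s)\<^sup>2 = (int s')\<^sup>2] (mod p)"
    using p_gt_1 by simp
  then have "p dvd (int s - int s') * (int s + int s')"
    by (simp add: cong_iff_dvd_diff power2_eq_square algebra_simps)
  moreover have "\<not> p dvd (int s + int s')"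
    using assms by (intro zdvd_not_zless) auto
  ultimately have "p dvd int s - int s'"
    using prime_p by (simp add: prime_dvd_mult_iff)
  then have "int s = int s'" using assms by (intro eq_if_dvd_diff) auto
  then show ?thesis by simp
qed

lemma lower_unipotent_pow: "(1, 0, p - 1, 1) [^]\<^bsub>SL2 p\<^esub> (n::nat) = (1, 0, (- int n) mod p, 1)"
proof (induction n)
  case 0
  then show ?case by (simp add: SL2_one)
next
  case (Suc n)
  have "((- int n) mod p + (p - 1)) mod p = (- int n + (p - 1)) mod p"
    by (simp add: mod_add_left_eq)
  also have "- int n + (p - 1) = - int (Suc n) + 1 * p" by simp
  also have "(- int (Suc n) + 1 * p) mod p = (- int (Suc n)) mod p" by (simp only: mod_mult_self1)
  finally show ?case using Suc p_gt_1 by (simp add: SL2_mult)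
qed

text \<open>The factors are found by solving mod \<open>p\<close>: \<open>x = (a - 1)/c\<close> and \<open>y = (d - 1)/c\<close>.\<close>

lemma SL2_bruhat:
  assumes Y: "(a, b, c, d) \<in> carrier (SL2 p)" and c: "c \<noteq> 0"
  obtains x y where "0 \<le> x" "x < p" "0 \<le> y" "y < p"
    "(a, b, c, d) = (1, x, 0, 1) \<otimes>\<^bsub>SL2 p\<^esub> (1, 0, c, 1) \<otimes>\<^bsub>SL2 p\<^esub> (1, y, 0, 1)"
proof -
  have r: "0 \<le> a" "a < p" "0 \<le> b" "b < p" "0 \<le> c" "c < p" "0 \<le> d" "d < p"
    and det: "(a * d - b * c) mod p = 1"
    using Y by (auto simp: SL2_carrier)
  define c' where "c' = modular_inverse p c"
  have cc': "[c * c' = 1] (mod p)"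
    using mult_modular_inverse_mod[of c] r c unfolding c'_def cong_def by (simp add: p_gt_1)
  define x where "x = ((a - 1) * c') mod p"
  define y where "y = ((d - 1) * c') mod p"
  have x: "[x = (a - 1) * c'] (mod p)" and y: "[y = (d - 1) * c'] (mod p)"
    unfolding x_def y_def cong_def by simp_all
  have "[1 + x * c = 1 + (a - 1) * (c * c')] (mod p)"
    using cong_add[OF cong_refl[of 1] cong_scalar_right[OF x, of c]] by (simp add: ac_simps)
  also have "[1 + (a - 1) * (c * c') = 1 + (a - 1) * 1] (mod p)"
    by (intro cong_add cong_scalar_left cc' cong_refl)
  finally have E1: "[1 + x * c = a] (mod p)" by simp
  have "[c * y + 1 = (d - 1) * (c * c') + 1] (mod p)"
    using cong_add[OF cong_scalar_right[OF y, of c] cong_refl[of 1]] by (simp add: ac_simps)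
  also have "[(d - 1) * (c * c') + 1 = (d - 1) * 1 + 1] (mod p)"
    by (intro cong_add cong_scalar_left cc' cong_refl)
  finally have E3: "[c * y + 1 = d] (mod p)" by simp
  have "[a * y + x = a * ((d - 1) * c') + (a - 1) * c'] (mod p)"
    using x y by (intro cong_add cong_scalar_left)
  also have "a * ((d - 1) * c') + (a - 1) * c' = (a * d - 1) * c'" by (simp add: algebra_simps)
  also have "[(a * d - 1) * c' = (b * c) * c'] (mod p)"
  proof (rule cong_scalar_right)
    have "[a * d - b * c = 1] (mod p)" using det p_gt_1 by (simp add: cong_def)
    then show "[a * d - 1 = b * c] (mod p)" by (simp add: cong_iff_dvd_diff algebra_simps)
  qed
  also have "[(b * c) * c' = b * 1] (mod p)"
    using cong_scalar_left[OF cc', of b] by (simp add: mult.assoc)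
  finally have E2: "[a * y + x = b] (mod p)" by simp
  have xy: "0 \<le> x" "x < p" "0 \<le> y" "y < p" unfolding x_def y_def using p_gt_1 by simp_all
  have "(1, x, 0, 1) \<otimes>\<^bsub>SL2 p\<^esub> (1, 0, c, 1) = (a, x, c, 1)"
    using E1 xy r p_gt_1 unfolding cong_def by (simp add: SL2_mult)
  moreover have "(a, x, c, 1) \<otimes>\<^bsub>SL2 p\<^esub> (1, y, 0, 1) = (a, b, c, d)"
    using E2 E3 xy r p_gt_1 unfolding cong_def by (simp add: SL2_mult)
  ultimately show ?thesis using that xy by simp
qed

context
  fixes H assumes subgroup_H: "subgroup H (SL2 p)"
    and conj_in_H: "\<And>g. g \<in> carrier (SL2 p) \<Longrightarrow> inv\<^bsub>SL2 p\<^esub> g \<otimes>\<^bsub>SL2 p\<^esub> upper_unipotent \<otimes>\<^bsub>SL2 p\<^esub> g \<in> H"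
begin

lemma pow_in_H: "g \<in> H \<Longrightarrow> g [^]\<^bsub>SL2 p\<^esub> (n::nat) \<in> H"
  by (induction n) (auto simp: subgroup.one_closed[OF subgroup_H] subgroup.m_closed[OF subgroup_H])

lemma upper_unipotents_in_H: "0 \<le> t \<Longrightarrow> t < p \<Longrightarrow> (1, t, 0, 1) \<in> H"
  using pow_in_H[of upper_unipotent "nat t"] conj_in_H[OF SL.one_closed] upper_unipotent_closed
  by (simp add: upper_unipotent_pow)

lemma lower_unipotents_in_H:
  assumes "0 \<le> t" "t < p"
  shows "(1, 0, t, 1) \<in> H"
proof -
  define w where "w = ((0::int), p - 1, (1::int), (0::int))"
  have w: "w \<in> carrier (SL2 p)" "(0, 1, p - 1, 0) \<in> carrier (SL2 p)"
    using p_gt_1 minus_one_sq_mod by (simp_all add: w_def SL2_carrier)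
  have "inv\<^bsub>SL2 p\<^esub> w = (0, 1, p - 1, 0)"
    by (rule SL.inv_equality) (use w p_gt_1 minus_one_sq_mod in \<open>simp_all add: w_def SL2_mult SL2_one\<close>)
  then have "inv\<^bsub>SL2 p\<^esub> w \<otimes>\<^bsub>SL2 p\<^esub> upper_unipotent \<otimes>\<^bsub>SL2 p\<^esub> w = (1, 0, p - 1, 1)"
    using p_gt_1 minus_one_sq_mod by (simp add: w_def upper_unipotent_def SL2_mult zmod_minus1)
  then have "(1, 0, p - 1, 1) \<in> H" using conj_in_H[OF w(1)] by simp
  moreover have "(- int (nat (p - t))) mod p = t"
  proof -
    have "- int (nat (p - t)) = t + (- 1) * p" using assms by simp
    then show ?thesis using assms by (simp only: mod_mult_self1) simp
  qed
  ultimately show ?thesis using pow_in_H[of "(1, 0, p - 1, 1)" "nat (p - t)"] by (simp add: lower_unipotent_pow)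
qed

lemma SL2_lower_left_nonzero_in_H:
  assumes "(a, b, c, d) \<in> carrier (SL2 p)" "c \<noteq> 0"
  shows "(a, b, c, d) \<in> H"
proof -
  obtain x y where "0 \<le> x" "x < p" "0 \<le> y" "y < p"
    and "(a, b, c, d) = (1, x, 0, 1) \<otimes>\<^bsub>SL2 p\<^esub> (1, 0, c, 1) \<otimes>\<^bsub>SL2 p\<^esub> (1, y, 0, 1)"
    using SL2_bruhat[OF assms] .
  moreover have "0 \<le> c" "c < p" using assms(1) by (auto simp: SL2_carrier)
  ultimately show ?thesis
    using upper_unipotents_in_H lower_unipotents_in_H subgroup.m_closed[OF subgroup_H] by simp
qed

text \<open>If \<open>c = 0\<close> then \<open>a \<noteq> 0\<close>, and left multiplication by a lower unipotent moves \<open>a\<close> into the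
  lower left corner.\<close>

lemma SL2_subset_H: "carrier (SL2 p) \<subseteq> H"
proof
  fix X assume X: "X \<in> carrier (SL2 p)"
  obtain a b c d where X_eq: "X = (a, b, c, d)" by (cases X) auto
  show "X \<in> H"
  proof (cases "c = 0")
    case True
    then have r: "0 \<le> a" "a < p" "0 \<le> b" "b < p" "0 \<le> d" "d < p" "a \<noteq> 0"
      using X unfolding X_eq by (auto simp: SL2_carrier)
    have L: "(1, 0, 1, 1) \<in> H" "(1, 0, 1, 1) \<in> carrier (SL2 p)"
      using lower_unipotents_in_H[of 1] p_gt_1 subgroup.subset[OF subgroup_H] by auto
    have "(1, 0, 1, 1) \<otimes>\<^bsub>SL2 p\<^esub> X = (a, b, a, (b + d) mod p)"
      using r True unfolding X_eq by (simp add: SL2_mult)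
    then have "(1, 0, 1, 1) \<otimes>\<^bsub>SL2 p\<^esub> X \<in> H"
      using SL2_lower_left_nonzero_in_H SL.m_closed[OF L(2) X] r(7) by simp
    then have "inv\<^bsub>SL2 p\<^esub> (1, 0, 1, 1) \<otimes>\<^bsub>SL2 p\<^esub> ((1, 0, 1, 1) \<otimes>\<^bsub>SL2 p\<^esub> X) \<in> H"
      by (rule subgroup.m_closed[OF subgroup_H subgroup.m_inv_closed[OF subgroup_H L(1)]])
    then show ?thesis using L(2) X by (simp add: SL.m_assoc[symmetric])
  qed (use SL2_lower_left_nonzero_in_H X X_eq in auto)
qed

end

lemma generate_SL2_conjugates:
  "generate (SL2 p) ((\<lambda>g. inv\<^bsub>SL2 p\<^esub> g \<otimes>\<^bsub>SL2 p\<^esub> upper_unipotent \<otimes>\<^bsub>SL2 p\<^esub> g) ` carrier (SL2 p))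
    = carrier (SL2 p)" (is "generate _ ?C = _")
proof -
  have "subgroup (generate (SL2 p) ?C) (SL2 p)"
    using upper_unipotent_closed by (intro SL.generate_is_subgroup) auto
  moreover have "inv\<^bsub>SL2 p\<^esub> g \<otimes>\<^bsub>SL2 p\<^esub> upper_unipotent \<otimes>\<^bsub>SL2 p\<^esub> g \<in> generate (SL2 p) ?C"
    if "g \<in> carrier (SL2 p)" for g
    using that by (intro generate.incl) blast
  ultimately show ?thesis using SL2_subset_H subgroup.subset by blast
qed

lemma generate_PSL2_conjugates:
  "generate (PSL2 p) ((\<lambda>g. inv\<^bsub>PSL2 p\<^esub> g \<otimes>\<^bsub>PSL2 p\<^esub> proj upper_unipotent \<otimes>\<^bsub>PSL2 p\<^esub> g) ` carrier (PSL2 p))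
    = carrier (PSL2 p)"
proof -
  have "(\<lambda>g. inv\<^bsub>PSL2 p\<^esub> g \<otimes>\<^bsub>PSL2 p\<^esub> proj upper_unipotent \<otimes>\<^bsub>PSL2 p\<^esub> g) ` carrier (PSL2 p)
      = proj ` (\<lambda>g. inv\<^bsub>SL2 p\<^esub> g \<otimes>\<^bsub>SL2 p\<^esub> upper_unipotent \<otimes>\<^bsub>SL2 p\<^esub> g) ` carrier (SL2 p)"
    unfolding carrier_PSL2 image_image using upper_unipotent_closed by (intro image_cong) simp_all
  also have "generate (PSL2 p) \<dots> = carrier (PSL2 p)"
    using upper_unipotent_closed
    by (subst proj.generate_img) (auto simp: generate_SL2_conjugates carrier_PSL2)
  finally show ?thesis .
qed

lemma conjugate_powers_PSL2:
  "conjugate_powers (PSL2 p) (nat p) (proj upper_unipotent) {1..(nat p - 1) div 2}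
     (\<lambda>s. proj (diag_SL2 p (int s))) (\<lambda>s. s\<^sup>2)"
proof -
  have range: "0 < s" "int s < p" "2 * int s < p" if "s \<in> {1..(nat p - 1) div 2}" for s
    using that p_gt_1 by auto
  show ?thesis
  proof (unfold_locales)
    show "finite (carrier (PSL2 p))" using finite_group_PSL2 by (simp add: finite_group_def finite_group_axioms_def)
    show "prime (nat p)" using prime_p by (simp add: prime_nat_iff_prime)
    show "proj upper_unipotent \<in> carrier (PSL2 p)" using upper_unipotent_closed by simp
    have "proj upper_unipotent [^]\<^bsub>PSL2 p\<^esub> nat p = proj (upper_unipotent [^]\<^bsub>SL2 p\<^esub> nat p)"
      by (rule proj.hom_nat_pow[OF upper_unipotent_closed, symmetric])
    also have "upper_unipotent [^]\<^bsub>SL2 p\<^esub> nat p = \<one>\<^bsub>SL2 p\<^esub>"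
      using p_gt_1 by (simp add: upper_unipotent_pow SL2_one)
    finally show "proj upper_unipotent [^]\<^bsub>PSL2 p\<^esub> nat p = \<one>\<^bsub>PSL2 p\<^esub>" by simp
    show "proj upper_unipotent \<noteq> \<one>\<^bsub>PSL2 p\<^esub>" by (rule proj_upper_unipotent_ne_one)
    show "generate (PSL2 p) ((\<lambda>g. inv\<^bsub>PSL2 p\<^esub> g \<otimes>\<^bsub>PSL2 p\<^esub> proj upper_unipotent \<otimes>\<^bsub>PSL2 p\<^esub> g) ` carrier (PSL2 p))
        = carrier (PSL2 p)" by (rule generate_PSL2_conjugates)
    show "finite {1..(nat p - 1) div 2}" by simp
    show "proj (diag_SL2 p (int s)) \<in> carrier (PSL2 p)" if "s \<in> {1..(nat p - 1) div 2}" for s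
      using diag_SL2_closed range[OF that] by simp
    show "inv\<^bsub>PSL2 p\<^esub> proj (diag_SL2 p (int s)) \<otimes>\<^bsub>PSL2 p\<^esub> proj upper_unipotent \<otimes>\<^bsub>PSL2 p\<^esub> proj (diag_SL2 p (int s))
        = proj upper_unipotent [^]\<^bsub>PSL2 p\<^esub> s\<^sup>2" if "s \<in> {1..(nat p - 1) div 2}" for s
    proof -
      have D: "diag_SL2 p (int s) \<in> carrier (SL2 p)" using diag_SL2_closed range[OF that] by simp
      have "inv\<^bsub>PSL2 p\<^esub> proj (diag_SL2 p (int s)) \<otimes>\<^bsub>PSL2 p\<^esub> proj upper_unipotent \<otimes>\<^bsub>PSL2 p\<^esub> proj (diag_SL2 p (int s))
          = proj (inv\<^bsub>SL2 p\<^esub> diag_SL2 p (int s) \<otimes>\<^bsub>SL2 p\<^esub> upper_unipotent \<otimes>\<^bsub>SL2 p\<^esub> diag_SL2 p (int s))"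
        using D upper_unipotent_closed by simp
      also have "\<dots> = proj (upper_unipotent [^]\<^bsub>SL2 p\<^esub> s\<^sup>2)"
        using diag_SL2_conj_upper_unipotent range[OF that] by simp
      finally show ?thesis using proj.hom_nat_pow[OF upper_unipotent_closed] by simp
    qed
    show "s = s'" if "s \<in> {1..(nat p - 1) div 2}" "s' \<in> {1..(nat p - 1) div 2}" "[s\<^sup>2 = s'\<^sup>2] (mod nat p)"
      for s s'
      using square_mod_inj range[OF that(1)] range[OF that(2)] that(3) by blast
  qed
qed

lemma M_PSL2_le_cube: "M (PSL2 p) \<le> nat p ^ 3"
proof -
  interpret PSL: finite_group "PSL2 p" by (rule finite_group_PSL2)
  have "M (PSL2 p) \<le> card (carrier (PSL2 p))"
    using mult_3_matching_le_card[OF PSL.finite_carrier mult_3_matching_M[OF PSL.finite_carrier]] .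
  then show ?thesis using card_PSL2_le by linarith
qed

theorem M_PSL2_le: "real (M (PSL2 p)) \<le> 3 * real_of_int p powr (8/3)"
proof (cases "p = 2")
  case True
  then have "real (M (PSL2 p)) \<le> 8" using M_PSL2_le_cube by simp
  also have "(8::real) \<le> 3 * 2 powr (8/3)"
    using powr_mono[of 2 "8/3" "2::real"] by simp
  finally show ?thesis using True by simp
next
  case False
  then have p3: "p \<ge> 3" using p_gt_1 by linarith
  interpret PSL: conjugate_powers "PSL2 p" "nat p" "proj upper_unipotent" "{1..(nat p - 1) div 2}"
    "\<lambda>s. proj (diag_SL2 p (int s))" "\<lambda>s. s\<^sup>2"
    by (rule conjugate_powers_PSL2)
  define m where "m = M (PSL2 p)"
  define n where "n = card (carrier (PSL2 p))"
  define k where "k = (nat p - 1) div 2"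
  obtain a b c where match: "is_3_matching (PSL2 p) m a b c"
    using mult_3_matching_M[OF PSL.finite_carrier] unfolding m_def mult_3_matching_iff by blast
  have A: "a ` {1..m} \<subseteq> carrier (PSL2 p)" using is_3_matching_closed[OF match] by auto
  have card_A: "card (a ` {1..m}) = m"
    using card_image[OF is_3_matching_inj_a[OF match]] by simp
  have "\<forall>q::nat. 3 \<le> q \<longrightarrow> 0 < (q - 1) div 2 \<and> q \<le> 4 * ((q - 1) div 2)" by presburger
  then have "0 < k \<and> nat p \<le> 4 * k" using p3 unfolding k_def by simp
  then have k: "real k > 0" "real_of_int p \<le> 4 * real k" using p3 by linarith+
  have "l2_norm_sq (carrier (PSL2 p)) (conv_set (PSL2 p) (a ` {1..m}) f)
      \<le> (real m * real n / real k) * l2_norm_sq (carrier (PSL2 p)) f"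
    if "sum f (carrier (PSL2 p)) = 0" for f
    using PSL.conv_set_spectral_bound[OF A that, unfolded card_A, folded n_def k_def] k(1)
    by (simp add: field_simps)
  then have "(real m)\<^sup>2 \<le> real n * (1 + sqrt (real m * real n / real k))"
    using PSL.is_3_matching_size_bound[OF match] k(1) unfolding n_def by simp
  moreover have "real n \<le> (real_of_int p) ^ 3"
    using card_PSL2_le p_gt_1 unfolding n_def by (metis of_int_of_nat_eq of_nat_le_iff of_nat_power int_nat_eq
        less_le_not_le zero_less_one order.strict_trans)
  ultimately show ?thesis
    unfolding m_def using p3 k by (intro matching_bound_arith) auto
qed

end

theorem proposition1p3:
  shows "\<exists>C::real. C > 0 \<and>
           (\<forall>p::int. prime p \<longrightarrow> real (M (PSL2 p)) \<le> C * (real_of_int p) powr (8/3))"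
proof (intro exI conjI allI impI)
  show "(3::real) > 0" by simp
  fix p :: int
  assume "prime p"
  then interpret SL2_mod_prime p by unfold_locales
  show "real (M (PSL2 p)) \<le> 3 * real_of_int p powr (8/3)" by (rule M_PSL2_le)
qed

end
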